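(* Let $k\ge1$, $n=2k-1$, $T^n=(\mathbb{R}/k\mathbb{Z})^n$, $X_0=\langle\!\langle[0,1]^2\times[0,2]^2\times\cdots\times[0,k-1]^2\times[0,k]\rangle\!\rangle$ and $X_i=X_0+(i,\dots,i)$ for $i\in\mathbb{Z}_k$. Let $I\subseteq\mathbb{Z}_k$ be nonempty, written $I=\{i_0,\dots,i_{\ell-1}\}$ with $0\le i_0<i_1<\cdots<i_{\ell-1}\le k-1$, and set $i_\ell=i_0+k$. For $s\in\{0,\dots,\ell-1\}$ define $C_{I,s}\subset T^n$ as the product, over $t=0,1,\dots,\ell-1$ in order, of the blocks \[B_t=\begin{cases}\{i_t\}\times\prod_{j=i_t+1}^{i_{t+1}-1}[i_t,j]^2\times[i_t,i_{t+1}] & t\neq s,\\[2pt] \prod_{j=i_t+1}^{i_{t+1}-1}[i_t,j]^2\times[i_t,i_{t+1}] & t=s,\end{cases}\] (an empty product contributes no factor). Then \[X_I:=\bigcap_{i\in I}X_i=\bigcup_{s=0}^{\ell-1}\langle\!\langle C_{I,s}\rangle\!\rangle.\] In particular, \[\bigcap_{i\in\mathbb{Z}_k}X_i=\bigcup_{i_*\in\mathbb{Z}_k}\Big\langle\!\Big\langle\{0\}\times\cdots\times\widehat{\{i_*\}}\times\cdots\times\{k-1\}\times\prod_{i=0}^{k-1}[i,i+1]\Big\rangle\!\Big\rangle,\] where the hat indicates that the singleton factor $\{i_*\}$ is omitted (so there are $k-1$ singleton factors followed by $k$ interval factors).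
   Context: For $U\subset T^n$, $\langle\!\langle U\rangle\!\rangle=\{\mathbf{x}_\sigma:\mathbf{x}\in U,\ \sigma\in S_n\}$ with $\mathbf{x}_\sigma=(x_{\sigma(1)},\dots,x_{\sigma(n)})$. $[a,b]^2$ denotes two Cartesian factors equal to $[a,b]$. Products of real intervals and singletons (each block $B_t$ contributes $2(i_{t+1}-i_t)$ or $2(i_{t+1}-i_t)-1$ factors, totaling $n$) are regarded as subsets of $T^n$ via the quotient $\mathbb{R}^n\to(\mathbb{R}/k\mathbb{Z})^n$. $X_0+(i,\dots,i)=\{\mathbf{x}+(i,\dots,i):\mathbf{x}\in X_0\}$. *)

theory Defs
  imports Complex_Main "HOL-Combinatorics.Permutations"
begin

(* T^n = (R / kZ)^n is represented by canonical representatives: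
   lists of length n with every entry in [0,k).  A subset of T^n is a set of such lists. *)

definition tred :: "real \<Rightarrow> real \<Rightarrow> real" where
  "tred k t = t - k * of_int \<lfloor>t / k\<rfloor>"

definition tproj :: "real \<Rightarrow> real list \<Rightarrow> real list" where
  "tproj k x = map (tred k) x"

(* product of real intervals [a,b] (singletons are [a,a]), as a subset of R^n *)
definition box :: "(real \<times> real) list \<Rightarrow> real list set" where
  "box B = {x. length x = length B \<and> (\<forall>j<length B. fst (B ! j) \<le> x ! j \<and> x ! j \<le> snd (B ! j))}"

definition tbox :: "real \<Rightarrow> (real \<times> real) list \<Rightarrow> real list set" where
  "tbox k B = tproj k ` box B"

definition symclos :: "real list set \<Rightarrow> real list set" where
  "symclos U = {permute_list \<sigma> x | x \<sigma>. x \<in> U \<and> \<sigma> permutes {..<length x}}"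

definition tshift :: "real \<Rightarrow> real \<Rightarrow> real list set \<Rightarrow> real list set" where
  "tshift k c U = tproj k ` ((\<lambda>x. map (\<lambda>t. t + c) x) ` U)"

definition X0 :: "nat \<Rightarrow> real list set" where
  "X0 k = symclos (tbox (real k)
      (concat (map (\<lambda>j. [(0, real j), (0, real j)]) [1..<k]) @ [(0, real k)]))"

definition Xi :: "nat \<Rightarrow> nat \<Rightarrow> real list set" where
  "Xi k i = tshift (real k) (real i) (X0 k)"

definition idx :: "nat \<Rightarrow> nat set \<Rightarrow> nat \<Rightarrow> nat" where
  "idx k I t = (let is = sorted_list_of_set I in
                if t < length is then is ! t else is ! 0 + k)"

definition Cblock :: "nat \<Rightarrow> nat set \<Rightarrow> nat \<Rightarrow> nat \<Rightarrow> (real \<times> real) list" where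
  "Cblock k I s t =
     (let a = idx k I t; b = idx k I (Suc t) in
       (if t = s then [] else [(real a, real a)])
       @ concat (map (\<lambda>j. [(real a, real j), (real a, real j)]) [Suc a..<b])
       @ [(real a, real b)])"

definition CIs :: "nat \<Rightarrow> nat set \<Rightarrow> nat \<Rightarrow> real list set" where
  "CIs k I s = tbox (real k) (concat (map (Cblock k I s) [0..<card I]))"

end

theory Submission
  imports Defs "HOL-Library.Disjoint_Sets"
begin

text \<open>
  A point lies in \<open>\<langle>\<langle>C\<rangle>\<rangle>\<close>, for a product \<open>C\<close> of arcs of \<open>\<real>/k\<int>\<close>, iff its coordinates can be
  matched to the factors of \<open>C\<close>, each coordinate lying on the arc of its factor. For \<open>X\<^sub>i\<close> these
  arcs all start at \<open>i\<close> and are nested, so by Hall's theorem \<open>x \<in> X\<^sub>i\<close> iff for every \<open>m < k\<close> at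
  least \<open>2m\<close> coordinates lie within forward distance \<open>m\<close> of \<open>i\<close>. Likewise \<open>x \<in> \<langle>\<langle>C\<^bsub>I,s\<^esub>\<rangle>\<rangle>\<close> iff the
  coordinates split into blocks, the \<open>t\<close>-th one satisfying Hall's condition for \<open>B\<^sub>t\<close>.

  Given such blocks and \<open>m < k\<close>, take \<open>w\<close> with \<open>i\<^sub>w \<le> i\<^sub>0 + m < i\<^bsub>w+1\<^esub>\<close>: the blocks before \<open>w\<close>,
  together with the coordinates of block \<open>w\<close> within reach, give \<open>2m\<close> coordinates within distance
  \<open>m\<close> of \<open>i\<^sub>0\<close>, because only block \<open>s\<close> lacks its singleton. Rotating the indices gives the same
  at every \<open>i \<in> I\<close>.

  Conversely, let the excess at \<open>t\<close> be the number of coordinates in \<open>[i\<^sub>0, i\<^sub>t)\<close> minus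
  \<open>2(i\<^sub>t - i\<^sub>0)\<close>, and let the peak \<open>s\<close> be the last index where the excess is maximal. Hall's
  condition at \<open>i\<^sub>s\<close>, read from \<open>i\<^sub>t\<close> (around the circle if \<open>t < s\<close>), shows that at least
  \<open>2m + [t \<noteq> s] + slack t\<close> coordinates lie within distance \<open>m\<close> of \<open>i\<^sub>t\<close>, where \<open>slack t\<close> is the
  excess at \<open>s\<close> minus the excess at \<open>t\<close> minus \<open>[s < t]\<close>. Block \<open>t\<close> then takes the coordinates
  strictly inside \<open>[i\<^sub>t, i\<^bsub>t+1\<^esub>)\<close>, all but \<open>slack t\<close> of those at \<open>i\<^sub>t\<close>, and the \<open>slack (t + 1)\<close>
  remaining ones at \<open>i\<^bsub>t+1\<^esub>\<close>, which serve as endpoints of its last factor \<open>[i\<^sub>t, i\<^bsub>t+1\<^esub>]\<close>.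
\<close>

lemma tred_eqI:
  fixes k :: real and z :: int
  assumes "k > 0" "0 \<le> t - k * z" "t - k * z < k"
  shows "tred k t = t - k * z"
proof -
  have "z \<le> t / k" "t / k < z + 1" using assms by (simp_all add: field_simps)
  then have "\<lfloor>t / k\<rfloor> = z" by linarith
  then show ?thesis by (simp add: tred_def)
qed

lemma tred_bounds:
  fixes k :: real assumes "k > 0"
  shows "0 \<le> tred k t" "tred k t < k"
proof -
  have "k * \<lfloor>t / k\<rfloor> \<le> k * (t / k)" using assms by (intro mult_left_mono) auto
  then show "0 \<le> tred k t" using assms by (simp add: tred_def)
  have "k * (t / k) < k * (\<lfloor>t / k\<rfloor> + 1)" using assms by (intro mult_strict_left_mono) auto
  then show "tred k t < k" using assms by (simp add: tred_def algebra_simps)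
qed

lemma tred_decomp:
  obtains z :: int where "t = tred k t + k * z"
  by (rule that[of "\<lfloor>t / k\<rfloor>"]) (simp add: tred_def)

lemma tred_add_multiple:
  fixes k :: real and z :: int assumes "k > 0"
  shows "tred k (t + k * z) = tred k t"
proof -
  obtain w :: int where w: "t = tred k t + k * w" by (rule tred_decomp)
  have "tred k (t + k * z) = t + k * z - k * (w + z)"
    using tred_bounds[OF assms, of t] w by (intro tred_eqI) (auto simp: algebra_simps)
  then show ?thesis using w by (simp add: algebra_simps)
qed

lemma tred_eq_self: fixes k :: real assumes "0 \<le> t" "t < k" shows "tred k t = t"
  using tred_eqI[of k t 0] assms by simp

lemma tred_le_self: fixes k :: real assumes "k > 0" "0 \<le> t" shows "tred k t \<le> t"
  using assms by (simp add: tred_def)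

lemma tred_tred_add: fixes k :: real assumes "k > 0"
  shows "tred k (tred k t + c) = tred k (t + c)"
proof -
  obtain w :: int where "t = tred k t + k * w" by (rule tred_decomp)
  then have "tred k (t + c) = tred k ((tred k t + c) + k * w)" by (metis add.commute add.left_commute)
  then show ?thesis using tred_add_multiple[OF assms] by simp
qed

definition cdist :: "real \<Rightarrow> real \<Rightarrow> real \<Rightarrow> real" where
  "cdist k a v = tred k (v - a)"

lemma cdist_bounds: "k > 0 \<Longrightarrow> 0 \<le> cdist k a v" "k > 0 \<Longrightarrow> cdist k a v < k"
  using tred_bounds by (auto simp: cdist_def)

lemma cdist_add_multiple: fixes z :: int assumes "k > 0" shows "cdist k (a + k * z) v = cdist k a v"
  using tred_add_multiple[OF assms, of "v - a" "- z"] by (simp add: cdist_def algebra_simps)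

lemma cdist_shift_ge: assumes "k > 0" "0 \<le> \<delta>" "\<delta> \<le> cdist k a v"
  shows "cdist k (a + \<delta>) v = cdist k a v - \<delta>"
proof -
  obtain w :: int where w: "v - a = tred k (v - a) + k * w" by (rule tred_decomp)
  have "tred k (v - (a + \<delta>)) = v - (a + \<delta>) - k * w"
    using assms cdist_bounds[OF assms(1), of a v] w unfolding cdist_def
    by (intro tred_eqI) (auto simp: algebra_simps)
  then show ?thesis using w by (simp add: cdist_def algebra_simps)
qed

lemma cdist_shift_less: assumes "k > 0" "\<delta> \<le> k" "cdist k a v < \<delta>"
  shows "cdist k (a + \<delta>) v = cdist k a v - \<delta> + k"
proof -
  obtain w :: int where w: "v - a = tred k (v - a) + k * w" by (rule tred_decomp)
  have "tred k (v - (a + \<delta>)) = v - (a + \<delta>) - k * (w - 1)"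
    using assms cdist_bounds[OF assms(1), of a v] w unfolding cdist_def
    by (intro tred_eqI) (auto simp: algebra_simps)
  then show ?thesis using w by (simp add: cdist_def algebra_simps)
qed

lemma cdist_le_shift: assumes "k > 0" "0 \<le> \<delta>"
  shows "cdist k a v \<le> cdist k (a + \<delta>) v + \<delta>"
proof (cases "\<delta> \<le> cdist k a v")
  case True then show ?thesis using cdist_shift_ge[OF assms True] by simp
next
  case False then show ?thesis using cdist_bounds[OF assms(1), of "a + \<delta>" v] by simp
qed

lemma cdist_shift_less_iff: assumes "k > 0" "0 \<le> \<delta>" "0 \<le> m" "\<delta> + m \<le> k"
  shows "cdist k (a + \<delta>) v < m \<longleftrightarrow> \<delta> \<le> cdist k a v \<and> cdist k a v < \<delta> + m"
proof (cases "\<delta> \<le> cdist k a v")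
  case True then show ?thesis using cdist_shift_ge[OF assms(1,2) True] by auto
next
  case False
  moreover have "\<delta> \<le> k" using assms by linarith
  ultimately show ?thesis
    using cdist_shift_less[OF assms(1), of \<delta> a v] cdist_bounds[OF assms(1), of a v] assms by auto
qed

lemma cdist_shift_le_iff: assumes "k > 0" "0 \<le> \<delta>" "0 \<le> m" "\<delta> + m < k"
  shows "cdist k (a + \<delta>) v \<le> m \<longleftrightarrow> \<delta> \<le> cdist k a v \<and> cdist k a v \<le> \<delta> + m"
proof (cases "\<delta> \<le> cdist k a v")
  case True then show ?thesis using cdist_shift_ge[OF assms(1,2) True] by auto
next
  case False
  moreover have "\<delta> \<le> k" using assms by linarith
  ultimately show ?thesis
    using cdist_shift_less[OF assms(1), of \<delta> a v] cdist_bounds[OF assms(1), of a v] assms by auto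
qed

lemma cdist_tred_shift: "k > 0 \<Longrightarrow> cdist k (a + c) (tred k (w + c)) = cdist k a w"
  unfolding cdist_def using tred_tred_add[of k "w + c" "- (a + c)"] by (simp add: algebra_simps)

lemma tred_image_atLeastAtMost:
  fixes k :: real
  assumes "k > 0" "0 \<le> v" "v < k"
  shows "v \<in> tred k ` {a..b} \<longleftrightarrow> cdist k a v \<le> b - a"
proof
  assume "v \<in> tred k ` {a..b}"
  then obtain y where y: "a \<le> y" "y \<le> b" "v = tred k y" by auto
  obtain w :: int where w: "y = tred k y + k * w" by (rule tred_decomp)
  have "v - a = (y - a) + k * of_int (- w)" using y(3) w by (simp add: algebra_simps)
  then have "cdist k a v = tred k (y - a)" unfolding cdist_def by (simp only: tred_add_multiple[OF assms(1)])
  also have "\<dots> \<le> y - a" using tred_le_self[OF assms(1)] y by simp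
  finally show "cdist k a v \<le> b - a" using y by simp
next
  assume h: "cdist k a v \<le> b - a"
  obtain w :: int where w: "v - a = tred k (v - a) + k * w" by (rule tred_decomp)
  have "a + cdist k a v = v + k * of_int (- w)" using w by (simp add: cdist_def algebra_simps)
  then have "tred k (a + cdist k a v) = v"
    using tred_add_multiple[OF assms(1)] tred_eq_self[OF assms(2,3)] by metis
  moreover have "a + cdist k a v \<in> {a..b}" using h cdist_bounds[OF assms(1), of a v] by auto
  ultimately show "v \<in> tred k ` {a..b}" by (metis image_eqI)
qed

lemma card_cdist_less_add:
  assumes "k > 0" "0 \<le> \<delta>" "0 \<le> m" "\<delta> + m \<le> k" "finite P"
  shows "card {p\<in>P. cdist k a (val p) < \<delta> + m}
    = card {p\<in>P. cdist k a (val p) < \<delta>} + card {p\<in>P. cdist k (a + \<delta>) (val p) < m}"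
proof -
  have "{p\<in>P. cdist k a (val p) < \<delta> + m}
      = {p\<in>P. cdist k a (val p) < \<delta>} \<union> {p\<in>P. cdist k (a + \<delta>) (val p) < m}"
    unfolding cdist_shift_less_iff[OF assms(1-4)] using assms(3) by auto
  moreover have "{p\<in>P. cdist k a (val p) < \<delta>} \<inter> {p\<in>P. cdist k (a + \<delta>) (val p) < m} = {}"
    unfolding cdist_shift_less_iff[OF assms(1-4)] by auto
  ultimately show ?thesis using assms(5) by (simp add: card_Un_disjoint)
qed

lemma card_cdist_le_add:
  assumes "k > 0" "0 \<le> \<delta>" "0 \<le> m" "\<delta> + m < k" "finite P"
  shows "card {p\<in>P. cdist k a (val p) \<le> \<delta> + m}
    = card {p\<in>P. cdist k a (val p) < \<delta>} + card {p\<in>P. cdist k (a + \<delta>) (val p) \<le> m}"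
proof -
  have "{p\<in>P. cdist k a (val p) \<le> \<delta> + m}
      = {p\<in>P. cdist k a (val p) < \<delta>} \<union> {p\<in>P. cdist k (a + \<delta>) (val p) \<le> m}"
    unfolding cdist_shift_le_iff[OF assms(1-4)] using assms(3) by auto
  moreover have "{p\<in>P. cdist k a (val p) < \<delta>} \<inter> {p\<in>P. cdist k (a + \<delta>) (val p) \<le> m} = {}"
    unfolding cdist_shift_le_iff[OF assms(1-4)] by auto
  ultimately show ?thesis using assms(5) by (simp add: card_Un_disjoint)
qed

section \<open>Hall's theorem for nested neighbourhoods\<close>

lemma card_threshold_le_if_bij:
  fixes d :: "'a \<Rightarrow> 'c::linorder" and e :: "'b \<Rightarrow> 'c"
  assumes "bij_betw f Q P" "\<And>q. q \<in> Q \<Longrightarrow> d (f q) \<le> e q" "finite P"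
  shows "card {q\<in>Q. e q \<le> t} \<le> card {p\<in>P. d p \<le> t}"
proof -
  have "inj_on f {q\<in>Q. e q \<le> t}"
    using assms(1) unfolding bij_betw_def by (auto intro: inj_on_subset)
  moreover have "f ` {q\<in>Q. e q \<le> t} \<subseteq> {p\<in>P. d p \<le> t}"
    using assms(1,2) unfolding bij_betw_def by (force intro: order_trans)
  ultimately show ?thesis using assms(3) by (intro card_inj_on_le) auto
qed

lemma bij_betw_fun_upd_Diff:
  assumes "bij_betw f (A - {a}) (B - {b})" "a \<in> A" "b \<in> B"
  shows "bij_betw (f(a := b)) A B"
proof -
  have "bij_betw (f(a := b)) (A - {a}) (B - {b})"
    using assms(1) by (rule bij_betw_cong[THEN iffD1, rotated]) auto
  then have "bij_betw (f(a := b)) (A - {a} \<union> {a}) (B - {b} \<union> {b})"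
    by (subst (asm) notIn_Un_bij_betw3[of a]) auto
  moreover have "A - {a} \<union> {a} = A" "B - {b} \<union> {b} = B" using assms(2,3) by auto
  ultimately show ?thesis by simp
qed

text \<open>When \<open>q\<close> may be matched to the \<open>p\<close> with \<open>d p \<le> e q\<close>, the neighbourhoods are nested, so
  Hall's condition need only be checked on the sets \<open>{q. e q \<le> t}\<close>.\<close>

lemma threshold_bij_exists:
  fixes d :: "'a \<Rightarrow> 'c::linorder" and e :: "'b \<Rightarrow> 'c"
  assumes "finite P" "finite Q" "card P = card Q"
    and "\<And>t. card {q\<in>Q. e q \<le> t} \<le> card {p\<in>P. d p \<le> t}"
  shows "\<exists>f. bij_betw f Q P \<and> (\<forall>q\<in>Q. d (f q) \<le> e q)"
  using assms
proof (induction "card Q" arbitrary: P Q)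
  case 0
  then have "Q = {}" "P = {}" by auto
  then show ?case by (simp add: bij_betw_def)
next
  case (Suc n)
  then have "Q \<noteq> {}" "P \<noteq> {}" by auto
  obtain q0 where q0: "q0 \<in> Q" "\<And>q. q \<in> Q \<Longrightarrow> e q \<le> e q0"
    using obtains_MAX[OF Suc.prems(2) \<open>Q \<noteq> {}\<close>] Suc.prems(2) by (metis Max_ge finite_imageI imageI)
  obtain p0 where p0: "p0 \<in> P" "\<And>p. p \<in> P \<Longrightarrow> d p \<le> d p0"
    using obtains_MAX[OF Suc.prems(1) \<open>P \<noteq> {}\<close>] Suc.prems(1) by (metis Max_ge finite_imageI imageI)
  have "{q\<in>Q. e q \<le> e q0} = Q" using q0 by auto
  then have "card P \<le> card {p\<in>P. d p \<le> e q0}" using Suc.prems(3,4) by metis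
  then have "{p\<in>P. d p \<le> e q0} = P" using Suc.prems(1) by (intro card_seteq) auto
  then have p0_le: "d p0 \<le> e q0" using p0(1) by blast
  have "card {q\<in>Q - {q0}. e q \<le> t} \<le> card {p\<in>P - {p0}. d p \<le> t}" for t
  proof (cases "d p0 \<le> t")
    case True
    then have "{p\<in>P - {p0}. d p \<le> t} = P - {p0}" using p0 by (auto intro: order_trans)
    moreover have "card {q\<in>Q - {q0}. e q \<le> t} \<le> card (Q - {q0})"
      using Suc.prems(2) by (intro card_mono) auto
    ultimately show ?thesis using Suc.prems(1-3) p0(1) q0(1) by simp
  next
    case False
    then have "{q\<in>Q - {q0}. e q \<le> t} = {q\<in>Q. e q \<le> t}" "{p\<in>P - {p0}. d p \<le> t} = {p\<in>P. d p \<le> t}"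
      using p0_le by auto
    then show ?thesis using Suc.prems(4) by simp
  qed
  moreover have "n = card (Q - {q0})" "card (P - {p0}) = card (Q - {q0})"
    using Suc.hyps(2) Suc.prems(1-3) p0(1) q0(1) by simp_all
  ultimately obtain f where f: "bij_betw f (Q - {q0}) (P - {p0})" "\<forall>q\<in>Q - {q0}. d (f q) \<le> e q"
    using Suc.hyps(1)[of "Q - {q0}" "P - {p0}"] Suc.prems(1,2) by auto
  then show ?case
    using bij_betw_fun_upd_Diff[OF f(1) q0(1) p0(1)] p0_le by (intro exI[of _ "f(q0 := p0)"]) auto
qed

section \<open>Matching coordinates to arcs\<close>

definition on_arc :: "real \<Rightarrow> real \<times> real \<Rightarrow> real \<Rightarrow> bool" where
  "on_arc k ab v \<longleftrightarrow> cdist k (fst ab) v \<le> snd ab - fst ab"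

definition arc_matching :: "real \<Rightarrow> (nat \<Rightarrow> real) \<Rightarrow> nat set \<Rightarrow> (real \<times> real) list \<Rightarrow> bool" where
  "arc_matching k val P B \<longleftrightarrow>
     (\<exists>ps. distinct ps \<and> set ps = P \<and> list_all2 (\<lambda>ab p. on_arc k ab (val p)) B ps)"

lemma arc_matching_Nil: "arc_matching k val P [] \<longleftrightarrow> P = {}"
  unfolding arc_matching_def by (simp add: eq_commute)

lemma arc_matching_append:
  "arc_matching k val P (B1 @ B2) \<longleftrightarrow>
    (\<exists>P1 P2. P = P1 \<union> P2 \<and> P1 \<inter> P2 = {} \<and> arc_matching k val P1 B1 \<and> arc_matching k val P2 B2)"
proof
  assume "arc_matching k val P (B1 @ B2)"
  then obtain ps1 ps2 where "distinct (ps1 @ ps2)" "set (ps1 @ ps2) = P"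
      "list_all2 (\<lambda>ab p. on_arc k ab (val p)) B1 ps1" "list_all2 (\<lambda>ab p. on_arc k ab (val p)) B2 ps2"
    unfolding arc_matching_def list_all2_append1 by blast
  then show "\<exists>P1 P2. P = P1 \<union> P2 \<and> P1 \<inter> P2 = {} \<and> arc_matching k val P1 B1 \<and> arc_matching k val P2 B2"
    unfolding arc_matching_def by (intro exI[of _ "set ps1"] exI[of _ "set ps2"]) auto
next
  assume "\<exists>P1 P2. P = P1 \<union> P2 \<and> P1 \<inter> P2 = {} \<and> arc_matching k val P1 B1 \<and> arc_matching k val P2 B2"
  then obtain ps1 ps2 where "distinct ps1" "distinct ps2" "set ps1 \<inter> set ps2 = {}" "P = set ps1 \<union> set ps2"
      "list_all2 (\<lambda>ab p. on_arc k ab (val p)) B1 ps1" "list_all2 (\<lambda>ab p. on_arc k ab (val p)) B2 ps2"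
    unfolding arc_matching_def by blast
  then show "arc_matching k val P (B1 @ B2)"
    unfolding arc_matching_def by (intro exI[of _ "ps1 @ ps2"]) (auto intro: list_all2_appendI)
qed

lemma arc_matching_concat:
  "arc_matching k val P (concat (map blk [0..<l])) \<longleftrightarrow>
    (\<exists>Pf. disjoint_family_on Pf {..<l} \<and> (\<Union>t<l. Pf t) = P \<and> (\<forall>t<l. arc_matching k val (Pf t) (blk t)))"
proof (induction l arbitrary: P)
  case 0
  then show ?case by (simp add: arc_matching_Nil disjoint_family_on_def eq_commute)
next
  case (Suc l)
  have split: "concat (map blk [0..<Suc l]) = concat (map blk [0..<l]) @ blk l" by simp
  have Un: "(\<Union>t<Suc l. Pf t) = (\<Union>t<l. Pf t) \<union> Pf l" for Pf :: "nat \<Rightarrow> nat set"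
    by (simp add: lessThan_Suc Un_commute)
  have disj: "disjoint_family_on Pf {..<Suc l} \<longleftrightarrow>
      Pf l \<inter> (\<Union>t<l. Pf t) = {} \<and> disjoint_family_on Pf {..<l}" for Pf :: "nat \<Rightarrow> nat set"
    by (simp add: lessThan_Suc disjoint_family_on_insert)
  show ?case
  proof
    assume "arc_matching k val P (concat (map blk [0..<Suc l]))"
    then obtain P2 Pf where "P = (\<Union>t<l. Pf t) \<union> P2" "(\<Union>t<l. Pf t) \<inter> P2 = {}"
        "arc_matching k val P2 (blk l)" "disjoint_family_on Pf {..<l}"
        "\<forall>t<l. arc_matching k val (Pf t) (blk t)"
      unfolding split arc_matching_append Suc.IH by blast
    moreover have "(\<Union>t<l. (Pf(l := P2)) t) = (\<Union>t<l. Pf t)" by simp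
    moreover have "disjoint_family_on (Pf(l := P2)) {..<l} = disjoint_family_on Pf {..<l}"
      unfolding disjoint_family_on_def by simp
    ultimately have "disjoint_family_on (Pf(l := P2)) {..<Suc l}" "(\<Union>t<Suc l. (Pf(l := P2)) t) = P"
        "\<forall>t<Suc l. arc_matching k val ((Pf(l := P2)) t) (blk t)"
      unfolding Un disj by (auto simp: less_Suc_eq)
    then show "\<exists>Pf. disjoint_family_on Pf {..<Suc l} \<and> (\<Union>t<Suc l. Pf t) = P \<and>
        (\<forall>t<Suc l. arc_matching k val (Pf t) (blk t))"
      by blast
  next
    assume "\<exists>Pf. disjoint_family_on Pf {..<Suc l} \<and> (\<Union>t<Suc l. Pf t) = P \<and>
        (\<forall>t<Suc l. arc_matching k val (Pf t) (blk t))"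
    then obtain Pf where "Pf l \<inter> (\<Union>t<l. Pf t) = {}" "disjoint_family_on Pf {..<l}"
        "P = (\<Union>t<l. Pf t) \<union> Pf l" "\<forall>t<Suc l. arc_matching k val (Pf t) (blk t)"
      unfolding Un disj by blast
    moreover from this have "arc_matching k val (\<Union>t<l. Pf t) (concat (map blk [0..<l]))"
      unfolding Suc.IH by auto
    ultimately show "arc_matching k val P (concat (map blk [0..<Suc l]))"
      unfolding split arc_matching_append by blast
  qed
qed

lemma arc_matching_mset_cong:
  assumes "mset B = mset B'"
  shows "arc_matching k val P B \<longleftrightarrow> arc_matching k val P B'"
proof -
  have "arc_matching k val P B" if eq: "mset B = mset B'" and B': "arc_matching k val P B'" for B B'
  proof -
    obtain \<sigma> where \<sigma>: "\<sigma> permutes {..<length B'}" "permute_list \<sigma> B' = B"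
      using mset_eq_permutation[OF eq] by blast
    obtain ps where ps: "distinct ps" "set ps = P" "list_all2 (\<lambda>ab p. on_arc k ab (val p)) B' ps"
      using B' unfolding arc_matching_def by blast
    have \<sigma>': "\<sigma> permutes {..<length ps}" using \<sigma>(1) ps(3) by (simp add: list_all2_lengthD)
    have "list_all2 (\<lambda>ab p. on_arc k ab (val p)) B (permute_list \<sigma> ps)"
      using ps(3) \<sigma> \<sigma>' permutes_in_image[OF \<sigma>'] by (auto simp: list_all2_conv_all_nth permute_list_nth)
    then show ?thesis unfolding arc_matching_def using ps(1,2) \<sigma>' by (intro exI[of _ "permute_list \<sigma> ps"]) simp
  qed
  then show ?thesis using assms by metis
qed

lemma arc_matching_iff_bij:
  "arc_matching k val P B \<longleftrightarrow>
    (\<exists>f. bij_betw f {..<length B} P \<and> (\<forall>j<length B. on_arc k (B!j) (val (f j))))"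
proof
  assume "arc_matching k val P B"
  then obtain ps where "distinct ps" "set ps = P" "list_all2 (\<lambda>ab p. on_arc k ab (val p)) B ps"
    unfolding arc_matching_def by blast
  moreover from this have "bij_betw ((!) ps) {..<length B} P"
    by (intro bij_betw_nth) (simp_all add: list_all2_lengthD)
  ultimately show "\<exists>f. bij_betw f {..<length B} P \<and> (\<forall>j<length B. on_arc k (B!j) (val (f j)))"
    by (auto simp: list_all2_conv_all_nth)
next
  assume "\<exists>f. bij_betw f {..<length B} P \<and> (\<forall>j<length B. on_arc k (B!j) (val (f j)))"
  then obtain f where f: "bij_betw f {..<length B} P" "\<forall>j<length B. on_arc k (B!j) (val (f j))"
    by blast
  then have "inj_on f {..<length B}" "f ` {..<length B} = P" by (simp_all add: bij_betw_def)
  then have "distinct (map f [0..<length B])" "set (map f [0..<length B]) = P"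
    by (simp_all add: distinct_map atLeast0LessThan)
  moreover have "list_all2 (\<lambda>ab p. on_arc k ab (val p)) B (map f [0..<length B])"
    using f(2) by (simp add: list_all2_conv_all_nth)
  ultimately show "arc_matching k val P B" unfolding arc_matching_def by blast
qed

lemma arc_matching_common_start_iff:
  assumes "\<And>ab. ab \<in> set B \<Longrightarrow> fst ab = a" "finite P"
  shows "arc_matching k val P B \<longleftrightarrow> card P = length B \<and>
    (\<forall>t. length (filter (\<lambda>ab. snd ab - a \<le> t) B) \<le> card {p\<in>P. cdist k a (val p) \<le> t})"
proof -
  have fits: "on_arc k (B!j) v \<longleftrightarrow> cdist k a v \<le> snd (B!j) - a" if "j < length B" for j v
    using assms(1)[OF nth_mem[OF that]] by (simp add: on_arc_def)
  have count: "length (filter (\<lambda>ab. snd ab - a \<le> t) B) = card {j\<in>{..<length B}. snd (B!j) - a \<le> t}" for t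
    by (simp add: length_filter_conv_card)
  show ?thesis
  proof
    assume "arc_matching k val P B"
    then obtain f where f: "bij_betw f {..<length B} P" "\<forall>j<length B. on_arc k (B!j) (val (f j))"
      unfolding arc_matching_iff_bij by blast
    have "card {j\<in>{..<length B}. snd (B!j) - a \<le> t} \<le> card {p\<in>P. cdist k a (val p) \<le> t}" for t
      using f(2) fits assms(2) by (intro card_threshold_le_if_bij[OF f(1)]) auto
    then show "card P = length B \<and>
        (\<forall>t. length (filter (\<lambda>ab. snd ab - a \<le> t) B) \<le> card {p\<in>P. cdist k a (val p) \<le> t})"
      using bij_betw_same_card[OF f(1)] unfolding count by simp
  next
    assume "card P = length B \<and>
        (\<forall>t. length (filter (\<lambda>ab. snd ab - a \<le> t) B) \<le> card {p\<in>P. cdist k a (val p) \<le> t})"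
    then obtain f where "bij_betw f {..<length B} P" "\<forall>j\<in>{..<length B}. cdist k a (val (f j)) \<le> snd (B!j) - a"
      using threshold_bij_exists[of P "{..<length B}" "\<lambda>j. snd (B!j) - a" "\<lambda>p. cdist k a (val p)"] assms(2)
      unfolding count by auto
    then show "arc_matching k val P B" unfolding arc_matching_iff_bij using fits by auto
  qed
qed

definition in_torus :: "real \<Rightarrow> real list \<Rightarrow> bool" where
  "in_torus k x \<longleftrightarrow> set x \<subseteq> {0..<k}"

lemma mem_tbox_iff:
  assumes "k > 0"
  shows "y \<in> tbox k B \<longleftrightarrow> in_torus k y \<and> list_all2 (on_arc k) B y"
proof
  assume "y \<in> tbox k B"
  then obtain z where z: "z \<in> box B" "y = map (tred k) z" unfolding tbox_def tproj_def by auto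
  have torus: "in_torus k y" using z(2) tred_bounds[OF assms] by (auto simp: in_torus_def)
  have "on_arc k (B!j) (y!j)" if "j < length B" for j
  proof -
    have "y!j \<in> tred k ` {fst (B!j)..snd (B!j)}" using z that by (auto simp: box_def)
    moreover have "y!j \<in> {0..<k}" using z that tred_bounds[OF assms] by (auto simp: box_def)
    ultimately show ?thesis using tred_image_atLeastAtMost[OF assms] by (simp add: on_arc_def)
  qed
  moreover have "length y = length B" using z by (simp add: box_def)
  ultimately show "in_torus k y \<and> list_all2 (on_arc k) B y" using torus by (simp add: list_all2_conv_all_nth)
next
  assume h: "in_torus k y \<and> list_all2 (on_arc k) B y"
  have len: "length y = length B" using h list_all2_lengthD by metis
  have "\<exists>w\<in>{fst (B!j)..snd (B!j)}. tred k w = y!j" if "j < length B" for j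
  proof -
    have "y!j \<in> set y" using that len by simp
    then have "y!j \<in> {0..<k}" using h by (auto simp: in_torus_def)
    moreover have "on_arc k (B!j) (y!j)" using h that by (simp add: list_all2_conv_all_nth)
    ultimately have "y!j \<in> tred k ` {fst (B!j)..snd (B!j)}"
      using tred_image_atLeastAtMost[OF assms] by (simp add: on_arc_def)
    then show ?thesis by auto
  qed
  then obtain w where w: "\<And>j. j < length B \<Longrightarrow> w j \<in> {fst (B!j)..snd (B!j)} \<and> tred k (w j) = y!j"
    by metis
  have "map w [0..<length B] \<in> box B" using w by (simp add: box_def)
  moreover have "y = map (tred k) (map w [0..<length B])" using w len by (auto intro: nth_equalityI)
  ultimately show "y \<in> tbox k B" unfolding tbox_def tproj_def by blast
qed

lemma mem_symclos_iff: "x \<in> symclos U \<longleftrightarrow> (\<exists>y\<in>U. mset y = mset x)"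
proof
  assume "x \<in> symclos U"
  then show "\<exists>y\<in>U. mset y = mset x" unfolding symclos_def by auto
next
  assume "\<exists>y\<in>U. mset y = mset x"
  then obtain y \<sigma> where "y \<in> U" "\<sigma> permutes {..<length y}" "permute_list \<sigma> y = x"
    by (metis mset_eq_permutation)
  then show "x \<in> symclos U" unfolding symclos_def by blast
qed

lemma mem_symclos_tbox_iff:
  assumes "k > 0"
  shows "x \<in> symclos (tbox k B) \<longleftrightarrow> in_torus k x \<and> arc_matching k (nth x) {..<length x} B"
proof
  assume "x \<in> symclos (tbox k B)"
  then obtain y where "y \<in> tbox k B" "mset y = mset x" unfolding mem_symclos_iff by blast
  then have y: "in_torus k y" "list_all2 (on_arc k) B y" "mset y = mset x"
    unfolding mem_tbox_iff[OF assms] by blast+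
  obtain \<sigma> where \<sigma>: "\<sigma> permutes {..<length x}" "permute_list \<sigma> x = y"
    using mset_eq_permutation[OF y(3)] by blast
  have "map (nth x) (map \<sigma> [0..<length x]) = y" using \<sigma>(2) by (simp add: permute_list_def o_def)
  then have "list_all2 (on_arc k) B (map (nth x) (map \<sigma> [0..<length x]))" using y(2) by simp
  then have "list_all2 (\<lambda>ab p. on_arc k ab (x!p)) B (map \<sigma> [0..<length x])"
    by (simp only: list_all2_map2)
  moreover have "distinct (map \<sigma> [0..<length x])" "set (map \<sigma> [0..<length x]) = {..<length x}"
    using permutes_inj_on[OF \<sigma>(1)] permutes_image[OF \<sigma>(1)] by (simp_all add: distinct_map atLeast0LessThan)
  moreover have "in_torus k x" using y(1,3) by (metis in_torus_def mset_eq_setD)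
  ultimately show "in_torus k x \<and> arc_matching k (nth x) {..<length x} B"
    unfolding arc_matching_def by blast
next
  assume h: "in_torus k x \<and> arc_matching k (nth x) {..<length x} B"
  then obtain ps where ps: "distinct ps" "set ps = {..<length x}" "list_all2 (\<lambda>ab p. on_arc k ab (x!p)) B ps"
    unfolding arc_matching_def by blast
  have "mset ps = mset [0..<length x]"
    using ps(1,2) set_eq_iff_mset_eq_distinct[of ps "[0..<length x]"] by (simp add: atLeast0LessThan)
  then have "mset (map (nth x) ps) = mset x" by (metis map_nth mset_map)
  moreover have "in_torus k (map (nth x) ps)" using h ps(2) nth_mem by (fastforce simp: in_torus_def)
  moreover have "list_all2 (on_arc k) B (map (nth x) ps)" using ps(3) by (simp add: list_all2_map2)
  ultimately show "x \<in> symclos (tbox k B)" unfolding mem_symclos_iff using mem_tbox_iff[OF assms] by blast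
qed

lemma symclos_tbox_mset_cong:
  assumes "k > 0" "mset B = mset B'"
  shows "symclos (tbox k B) = symclos (tbox k B')"
  using arc_matching_mset_cong[OF assms(2)] by (auto simp: mem_symclos_tbox_iff[OF assms(1)])

lemma arc_matching_shift:
  assumes "k > 0" "\<And>p. p \<in> P \<Longrightarrow> val' p = tred k (val p + c)"
  shows "arc_matching k val' P (map (\<lambda>(a, b). (a + c, b + c)) B) \<longleftrightarrow> arc_matching k val P B"
proof -
  have arc: "on_arc k ((\<lambda>(a, b). (a + c, b + c)) ab) (val' p) \<longleftrightarrow> on_arc k ab (val p)" if "p \<in> P" for ab p
    using assms(2)[OF that] cdist_tred_shift[OF assms(1)] by (cases ab) (simp add: on_arc_def)
  have "list_all2 (\<lambda>ab p. on_arc k ab (val' p)) (map (\<lambda>(a, b). (a + c, b + c)) B) ps \<longleftrightarrow>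
      list_all2 (\<lambda>ab p. on_arc k ab (val p)) B ps" if "set ps = P" for ps
    unfolding list_all2_map1 using arc that by (metis (no_types, lifting) list.rel_mono_strong)
  then show ?thesis unfolding arc_matching_def by blast
qed

lemma tshift_symclos_tbox:
  assumes "k > 0"
  shows "tshift k c (symclos (tbox k B)) = symclos (tbox k (map (\<lambda>(a, b). (a + c, b + c)) B))"
proof (rule set_eqI)
  fix x
  let ?B' = "map (\<lambda>(a, b). (a + c, b + c)) B"
  have "tshift k c (symclos (tbox k B)) = (\<lambda>w. map (\<lambda>t. tred k (t + c)) w) ` symclos (tbox k B)"
    unfolding tshift_def tproj_def by (simp add: image_image o_def)
  then have "x \<in> tshift k c (symclos (tbox k B)) \<longleftrightarrow>
      (\<exists>w. in_torus k w \<and> arc_matching k (nth w) {..<length w} B \<and> x = map (\<lambda>t. tred k (t + c)) w)"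
    by (auto simp: mem_symclos_tbox_iff[OF assms])
  also have "\<dots> \<longleftrightarrow> in_torus k x \<and> arc_matching k (nth x) {..<length x} ?B'"
  proof
    assume "\<exists>w. in_torus k w \<and> arc_matching k (nth w) {..<length w} B \<and> x = map (\<lambda>t. tred k (t + c)) w"
    then obtain w where w: "arc_matching k (nth w) {..<length w} B" "x = map (\<lambda>t. tred k (t + c)) w"
      by blast
    have "in_torus k x" using w(2) tred_bounds[OF assms] by (auto simp: in_torus_def)
    moreover have "arc_matching k (nth x) {..<length x} ?B'"
      using w by (subst arc_matching_shift[OF assms]) auto
    ultimately show "in_torus k x \<and> arc_matching k (nth x) {..<length x} ?B'" ..
  next
    assume h: "in_torus k x \<and> arc_matching k (nth x) {..<length x} ?B'"
    define w where "w = map (\<lambda>t. tred k (t - c)) x"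
    have undo: "tred k (tred k (t - c) + c) = t" if "t \<in> set x" for t
      using h that tred_tred_add[OF assms, of "t - c" c] tred_eq_self[of t k]
      by (auto simp: in_torus_def)
    have x: "x = map (\<lambda>t. tred k (t + c)) w"
      unfolding w_def map_map o_def by (rule map_idI[symmetric]) (simp add: undo)
    have xw: "x!p = tred k (w!p + c)" if "p < length w" for p
      using that by (subst x) simp
    have "length w = length x" by (simp add: w_def)
    have "in_torus k w" unfolding w_def using tred_bounds[OF assms] by (auto simp: in_torus_def)
    moreover have "arc_matching k (nth w) {..<length w} B"
      using h arc_matching_shift[OF assms, of "{..<length w}" "nth x" "nth w" c B] xw
      by (simp add: \<open>length w = length x\<close>)
    ultimately show "\<exists>w. in_torus k w \<and> arc_matching k (nth w) {..<length w} B \<and> x = map (\<lambda>t. tred k (t + c)) w"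
      using x by blast
  qed
  also have "\<dots> \<longleftrightarrow> x \<in> symclos (tbox k ?B')" by (rule mem_symclos_tbox_iff[OF assms, symmetric])
  finally show "x \<in> tshift k c (symclos (tbox k B)) \<longleftrightarrow> x \<in> symclos (tbox k ?B')" .
qed

text \<open>The block \<open>B\<^sub>t\<close> of \<open>C\<^bsub>I,s\<^esub>\<close> for \<open>i\<^sub>t = a\<close> and \<open>i\<^bsub>t+1\<^esub> = b\<close>; the flag says whether
  the singleton factor \<open>{a}\<close> is present, that is, whether \<open>t \<noteq> s\<close>.\<close>

definition block :: "nat \<Rightarrow> nat \<Rightarrow> bool \<Rightarrow> (real \<times> real) list" where
  "block a b f = (if f then [(real a, real a)] else []) @
     concat (map (\<lambda>j. [(real a, real j), (real a, real j)]) [Suc a..<b]) @ [(real a, real b)]"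

lemma length_concat_pairs: "length (concat (map (\<lambda>j. [g j, g j]) xs)) = 2 * length xs"
  by (induction xs) auto

lemma length_filter_concat_pairs:
  "length (filter P (concat (map (\<lambda>j. [g j, g j]) xs))) = 2 * length (filter (P \<circ> g) xs)"
  by (induction xs) auto

lemma length_block: "a < b \<Longrightarrow> length (block a b f) = 2 * (b - a) - (if f then 0 else 1)"
  by (auto simp: block_def length_concat_pairs)

lemma mem_set_block:
  "ab \<in> set (block a b f) \<Longrightarrow> a \<le> b \<Longrightarrow> fst ab = real a \<and> (\<exists>n. snd ab = real n \<and> a \<le> n \<and> n \<le> b)"
  unfolding block_def by (auto split: if_splits)

lemma length_filter_block_nat:
  assumes "m < b - a"
  shows "length (filter (\<lambda>ab. snd ab - real a \<le> real m) (block a b f)) = 2 * m + (if f then 1 else 0)"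
proof -
  have "[Suc a..<b] = [Suc a..<Suc a + m] @ [Suc a + m..<b]"
    using upt_add_eq_append[of "Suc a" "Suc a + m" "b - (Suc a + m)"] assms by simp
  moreover have "filter (\<lambda>j. real j - real a \<le> real m) [Suc a..<Suc a + m] = [Suc a..<Suc a + m]"
    by (rule filter_True) auto
  moreover have "filter (\<lambda>j. real j - real a \<le> real m) [Suc a + m..<b] = []"
    by (rule filter_False) auto
  ultimately have "length (filter (\<lambda>j. real j - real a \<le> real m) [Suc a..<b]) = m"
    by simp
  moreover have "\<not> real b - real a \<le> real m" using assms by linarith
  ultimately show ?thesis unfolding block_def by (simp add: length_filter_concat_pairs o_def)
qed

lemma length_filter_block:
  assumes "a < b"
  shows "length (filter (\<lambda>ab. snd ab - real a \<le> t) (block a b f)) =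
    (if t < 0 then 0 else if real (b - a) \<le> t then length (block a b f)
     else 2 * nat \<lfloor>t\<rfloor> + (if f then 1 else 0))"
proof -
  have snd: "real a \<le> snd ab \<and> snd ab \<le> real b \<and> snd ab \<in> \<nat>" if "ab \<in> set (block a b f)" for ab
    using mem_set_block[OF that] assms by (auto simp: of_nat_in_Nats)
  consider "t < 0" | "real (b - a) \<le> t" | "0 \<le> t" "t < real (b - a)" by linarith
  then show ?thesis
  proof cases
    case 1
    have "filter (\<lambda>ab. snd ab - real a \<le> t) (block a b f) = []"
    proof (rule filter_False)
      show "\<forall>ab\<in>set (block a b f). \<not> snd ab - real a \<le> t" using snd 1 by fastforce
    qed
    then show ?thesis using 1 by simp
  next
    case 2
    have "filter (\<lambda>ab. snd ab - real a \<le> t) (block a b f) = block a b f"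
    proof (rule filter_True)
      show "\<forall>ab\<in>set (block a b f). snd ab - real a \<le> t" using snd 2 assms by (fastforce simp: of_nat_diff)
    qed
    then show ?thesis using 2 assms by simp
  next
    case 3
    have "snd ab - real a \<le> t \<longleftrightarrow> snd ab - real a \<le> real (nat \<lfloor>t\<rfloor>)" if ab: "ab \<in> set (block a b f)" for ab
    proof -
      obtain n where "snd ab = real n" using snd[OF ab] by (auto elim: Nats_cases)
      moreover have "real n - real a \<le> t \<longleftrightarrow> int n - int a \<le> \<lfloor>t\<rfloor>" by (simp add: le_floor_iff)
      moreover have "real (nat \<lfloor>t\<rfloor>) = of_int \<lfloor>t\<rfloor>" using 3 by simp
      ultimately show ?thesis by (metis of_int_diff of_int_le_iff of_int_of_nat_eq)
    qed
    then have "filter (\<lambda>ab. snd ab - real a \<le> t) (block a b f) =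
        filter (\<lambda>ab. snd ab - real a \<le> real (nat \<lfloor>t\<rfloor>)) (block a b f)"
      by (rule filter_cong[OF refl])
    moreover have "nat \<lfloor>t\<rfloor> < b - a" using 3 by linarith
    ultimately show ?thesis using 3 length_filter_block_nat[of "nat \<lfloor>t\<rfloor>" b a f] by simp
  qed
qed

definition block_counts :: "real \<Rightarrow> (nat \<Rightarrow> real) \<Rightarrow> int \<Rightarrow> int \<Rightarrow> bool \<Rightarrow> nat set \<Rightarrow> bool" where
  "block_counts k val a b f Q \<longleftrightarrow>
     int (card Q) = 2 * (b - a) - (if f then 0 else 1) \<and>
     (\<forall>p\<in>Q. cdist k (of_int a) (val p) \<le> of_int (b - a)) \<and>
     (\<forall>m::nat. int m < b - a \<longrightarrow>
        2 * m + (if f then 1 else 0) \<le> card {p\<in>Q. cdist k (of_int a) (val p) \<le> real m})"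

lemma arc_matching_block_iff:
  assumes "a < b" "finite Q"
  shows "arc_matching k val Q (block a b f) \<longleftrightarrow> block_counts k val (int a) (int b) f Q"
proof -
  let ?N = "\<lambda>t. card {p\<in>Q. cdist k (real a) (val p) \<le> t}"
  let ?c = "\<lambda>t. length (filter (\<lambda>ab. snd ab - real a \<le> t) (block a b f))"
  have diff: "of_int (int b - int a) = real (b - a)" "int m < int b - int a \<longleftrightarrow> m < b - a" for m
    using assms(1) by (simp add: of_nat_diff, arith)
  have counts: "block_counts k val (int a) (int b) f Q \<longleftrightarrow>
      card Q = length (block a b f) \<and> (\<forall>p\<in>Q. cdist k (real a) (val p) \<le> real (b - a)) \<and>
      (\<forall>m<b - a. 2 * m + (if f then 1 else 0) \<le> ?N (real m))"
    unfolding block_counts_def diff length_block[OF assms(1)] using assms(1) by (auto simp: of_nat_diff)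
  have start: "fst ab = real a" if "ab \<in> set (block a b f)" for ab
    using mem_set_block[OF that] assms(1) by simp
  have "arc_matching k val Q (block a b f) \<longleftrightarrow> card Q = length (block a b f) \<and> (\<forall>t. ?c t \<le> ?N t)"
    by (rule arc_matching_common_start_iff[OF start assms(2)])
  also have "\<dots> \<longleftrightarrow> block_counts k val (int a) (int b) f Q"
  proof
    assume h: "card Q = length (block a b f) \<and> (\<forall>t. ?c t \<le> ?N t)"
    moreover have "?c (real (b - a)) = length (block a b f)" using length_filter_block[OF assms(1)] by simp
    ultimately have "card Q \<le> ?N (real (b - a))" by metis
    then have "{p\<in>Q. cdist k (real a) (val p) \<le> real (b - a)} = Q"
      using assms(2) by (intro card_seteq) auto
    moreover have "2 * m + (if f then 1 else 0) \<le> ?N (real m)" if "m < b - a" for m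
      using h[THEN conjunct2, rule_format, of "real m"] length_filter_block_nat[OF that, of f] by simp
    ultimately show "block_counts k val (int a) (int b) f Q" unfolding counts using h by blast
  next
    assume "block_counts k val (int a) (int b) f Q"
    then have h: "card Q = length (block a b f)" "\<forall>p\<in>Q. cdist k (real a) (val p) \<le> real (b - a)"
        "\<forall>m<b - a. 2 * m + (if f then 1 else 0) \<le> ?N (real m)"
      unfolding counts by blast+
    have "?c t \<le> ?N t" for t
    proof (cases "t < 0 \<or> real (b - a) \<le> t")
      case True
      moreover have "{p\<in>Q. cdist k (real a) (val p) \<le> t} = Q" if "real (b - a) \<le> t"
        using h(2) that by force
      ultimately show ?thesis using length_filter_block[OF assms(1)] h(1) by auto
    next
      case False
      define m where "m = nat \<lfloor>t\<rfloor>"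
      have "\<lfloor>t\<rfloor> < int (b - a)" "0 \<le> \<lfloor>t\<rfloor>" using False by (simp_all add: floor_less_iff)
      then have "m < b - a" "real m \<le> t" unfolding m_def by (simp_all add: nat_less_iff)
      then have "2 * m + (if f then 1 else 0) \<le> ?N (real m)" "?N (real m) \<le> ?N t"
        using h(3) assms(2) by (auto intro!: card_mono)
      then show ?thesis using False length_filter_block[OF assms(1)] unfolding m_def by simp
    qed
    then show "card Q = length (block a b f) \<and> (\<forall>t. ?c t \<le> ?N t)" using h(1) by blast
  qed
  finally show ?thesis .
qed

definition nested_hall :: "nat \<Rightarrow> (nat \<Rightarrow> real) \<Rightarrow> nat set \<Rightarrow> real \<Rightarrow> bool" where
  "nested_hall k val P a \<longleftrightarrow> (\<forall>m<k. 2 * m \<le> card {p\<in>P. cdist (real k) a (val p) \<le> real m})"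

lemma X0_shift_eq_block:
  "map (\<lambda>(a, b). (a + real i, b + real i))
     (concat (map (\<lambda>j. [(0, real j), (0, real j)]) [1..<k]) @ [(0, real k)]) = block i (i + k) False"
proof -
  have "[Suc i..<i + k] = map (\<lambda>j. j + i) [1..<k]" by (induction k) auto
  then show ?thesis unfolding block_def by (simp add: map_concat o_def add.commute)
qed

lemma Xi_eq_block:
  assumes "k \<ge> 1" shows "Xi k i = symclos (tbox (real k) (block i (i + k) False))"
proof -
  have "real k > 0" using assms by simp
  show ?thesis unfolding Xi_def X0_def tshift_symclos_tbox[OF \<open>real k > 0\<close>] X0_shift_eq_block ..
qed

lemma mem_Xi_iff:
  assumes "k \<ge> 1"
  shows "x \<in> Xi k i \<longleftrightarrow>
    length x = 2 * k - 1 \<and> in_torus (real k) x \<and> nested_hall k (nth x) {..<length x} (real i)"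
proof -
  have k: "real k > 0" "i < i + k" using assms by auto
  have "x \<in> Xi k i \<longleftrightarrow>
      in_torus (real k) x \<and> block_counts (real k) (nth x) (int i) (int (i + k)) False {..<length x}"
    unfolding Xi_eq_block[OF assms] mem_symclos_tbox_iff[OF k(1)] arc_matching_block_iff[OF k(2) finite_lessThan] ..
  also have "\<dots> \<longleftrightarrow> length x = 2 * k - 1 \<and> in_torus (real k) x \<and> nested_hall k (nth x) {..<length x} (real i)"
    unfolding block_counts_def nested_hall_def using cdist_bounds(2)[OF k(1)] assms
    by (auto simp: less_imp_le)
  finally show ?thesis .
qed

section \<open>Cut points on the circle\<close>

lemma add_mod_eq_imp_eq:
  fixes t r u l :: nat
  assumes "t < l" "r < l" "(t + u) mod l = (r + u) mod l"
  shows "t = r"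
proof -
  have "t = r" if "t < l" "(t + u) mod l = (r + u) mod l" "r \<le> t" for t r
  proof -
    have "l dvd t - r" using mod_eq_dvd_iff_nat[of "r + u" "t + u" l] that by simp
    then show ?thesis using that by (cases "t - r = 0") (auto dest: dvd_imp_le)
  qed
  then show ?thesis using assms by (metis nat_le_linear)
qed

locale periodic_cuts =
  fixes k l :: nat and J :: "nat \<Rightarrow> int"
  assumes k_pos: "0 < k"
    and J_less_Suc: "J t < J (Suc t)"
    and J_add_period: "J (t + l) = J t + int k"
begin

lemma J_less: "t < r \<Longrightarrow> J t < J r"
  using lift_Suc_mono_less[of J] J_less_Suc by blast

lemma J_mono: "t \<le> r \<Longrightarrow> J t \<le> J r"
  using J_less by (cases "t = r") (auto simp: order_le_less)

lemma J_period: "J l = J 0 + int k"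
  using J_add_period[of 0] by simp

lemma l_pos: "0 < l"
  using J_period k_pos by (cases l) auto

lemma J_add_mult_period: "J (t + q * l) = J t + int q * int k"
proof (induction q)
  case (Suc q)
  have "t + Suc q * l = t + q * l + l" by simp
  then show ?case using Suc J_add_period[of "t + q * l"] by (simp add: algebra_simps)
qed simp

lemma rotate: "periodic_cuts k l (\<lambda>t. J (t + u))"
proof
  fix t
  show "J (t + u) < J (Suc t + u)" using J_less_Suc[of "t + u"] by simp
  show "J (t + l + u) = J (t + u) + int k" using J_add_period[of "t + u"] by (simp add: add_ac)
qed (rule k_pos)

abbreviation dist_from :: "nat \<Rightarrow> real \<Rightarrow> real" where
  "dist_from t v \<equiv> cdist (real k) (of_int (J t)) v"

lemma dist_from_add_mult_period: "dist_from (t + q * l) v = dist_from t v"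
proof -
  have "real_of_int (J (t + q * l)) = of_int (J t) + real k * of_int (int q)"
    by (simp add: J_add_mult_period)
  then show ?thesis using cdist_add_multiple[of "real k" "of_int (J t)" "int q" v] k_pos by simp
qed

lemma dist_from_mod: "dist_from (t mod l) v = dist_from t v"
  using dist_from_add_mult_period[of "t mod l" "t div l"] by simp

lemma dist_from_le: "t \<le> r \<Longrightarrow> dist_from t v \<le> dist_from r v + of_int (J r - J t)"
  using cdist_le_shift[of "real k" "of_int (J r - J t)" "of_int (J t)" v] k_pos J_mono[of t r] by simp

lemma obtain_cut:
  assumes "0 \<le> x" "x < real k"
  obtains w where "w < l" "of_int (J w - J 0) \<le> x" "x < of_int (J (Suc w) - J 0)"
proof -
  define W where "W = {w. w \<le> l \<and> of_int (J w - J 0) \<le> x}"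
  have "0 \<in> W" "finite W" using assms(1) by (auto simp: W_def)
  then have "Max W \<in> W" by (intro Max_in) auto
  moreover have "Max W \<noteq> l" using \<open>Max W \<in> W\<close> J_period assms(2) by (auto simp: W_def)
  moreover have "\<not> of_int (J (Suc (Max W)) - J 0) \<le> x"
  proof
    assume "of_int (J (Suc (Max W)) - J 0) \<le> x"
    then have "Suc (Max W) \<in> W" using \<open>Max W \<in> W\<close> \<open>Max W \<noteq> l\<close> by (auto simp: W_def)
    then show False using Max_ge[OF \<open>finite W\<close>] by fastforce
  qed
  ultimately show ?thesis using that[of "Max W"] by (auto simp: W_def not_le)
qed

lemma dist_from_less_iff:
  assumes "t < l"
  shows "dist_from t v < of_int (J (Suc t) - J t) \<longleftrightarrow>
    of_int (J t - J 0) \<le> dist_from 0 v \<and> dist_from 0 v < of_int (J (Suc t) - J 0)"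
proof -
  have "J 0 \<le> J t" "J t < J (Suc t)" "J (Suc t) \<le> J l" using J_mono J_less_Suc assms by auto
  then have bounds: "0 \<le> real_of_int (J t - J 0)" "0 \<le> real_of_int (J (Suc t) - J t)"
      "real_of_int (J t - J 0) + of_int (J (Suc t) - J t) \<le> real k"
    using J_period by simp_all
  have "dist_from t v = cdist (real k) (of_int (J 0) + of_int (J t - J 0)) v" by simp
  also have "\<dots> < of_int (J (Suc t) - J t) \<longleftrightarrow>
      of_int (J t - J 0) \<le> dist_from 0 v \<and> dist_from 0 v < of_int (J t - J 0) + of_int (J (Suc t) - J t)"
    using k_pos bounds by (intro cdist_shift_less_iff) simp_all
  finally show ?thesis by simp
qed

lemma sum_card_blocks:
  assumes "disjoint_family_on Pf {..<w}" "\<And>t. t < w \<Longrightarrow> finite (Pf t)"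
    and "\<And>t. t < w \<Longrightarrow> int (card (Pf t)) = 2 * (J (Suc t) - J t) - (if fl t then 0 else 1)"
  shows "int (card (\<Union>t<w. Pf t)) = 2 * (J w - J 0) - int (card {t. t < w \<and> \<not> fl t})"
proof -
  have "card (\<Union>t<w. Pf t) = (\<Sum>t<w. card (Pf t))"
    using assms(1,2) by (intro card_UN_disjoint') auto
  then have "int (card (\<Union>t<w. Pf t)) = (\<Sum>t<w. int (card (Pf t)))" by simp
  also have "\<dots> = (\<Sum>t<w. 2 * (J (Suc t) - J t) - (if fl t then 0 else 1))"
    using assms(3) by (intro sum.cong) auto
  also have "\<dots> = 2 * (\<Sum>t<w. J (Suc t) - J t) - (\<Sum>t<w. if fl t then 0 else 1)"
    by (simp add: sum_subtractf sum_distrib_left)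
  also have "(\<Sum>t<w. if fl t then 0 else 1 :: int) = int (card {t. t < w \<and> \<not> fl t})"
    by (simp add: sum.If_cases Int_def lessThan_def)
  finally show ?thesis by (simp add: sum_lessThan_telescope)
qed

lemma card_false_flags_le:
  fixes w :: nat
  assumes "\<And>t r. t \<le> w \<Longrightarrow> r \<le> w \<Longrightarrow> \<not> fl t \<Longrightarrow> \<not> fl r \<Longrightarrow> t = r"
  shows "card {t. t < w \<and> \<not> fl t} \<le> (if fl w then 1 else 0)"
proof (cases "fl w")
  case True
  have "\<forall>a\<in>{t. t < w \<and> \<not> fl t}. \<forall>b\<in>{t. t < w \<and> \<not> fl t}. a = b"
    using assms less_imp_le by blast
  then show ?thesis using True card_le_Suc0_iff_eq[of "{t. t < w \<and> \<not> fl t}"] by simp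
next
  case False
  have "fl t" if "t < w" for t using assms[of t w] that False by (metis less_imp_le less_irrefl order_refl)
  then have "{t. t < w \<and> \<not> fl t} = {}" by blast
  then show ?thesis by (simp only: card.empty)
qed

lemma UN_blocks_before:
  assumes "w \<le> l" "disjoint_family_on Pf {..<l}" "\<And>t. t < l \<Longrightarrow> Pf t \<subseteq> P" "finite P"
    and blocks: "\<And>t. t < l \<Longrightarrow> block_counts (real k) val (J t) (J (Suc t)) (fl t) (Pf t)"
  shows "(\<Union>t<w. Pf t) \<subseteq> {p\<in>P. dist_from 0 (val p) \<le> of_int (J w - J 0)}"
    and "int (card (\<Union>t<w. Pf t)) = 2 * (J w - J 0) - int (card {t. t < w \<and> \<not> fl t})"
proof
  fix p assume "p \<in> (\<Union>t<w. Pf t)"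
  then obtain t where t: "t < w" "p \<in> Pf t" by blast
  moreover have "t < l" using t(1) assms(1) by simp
  ultimately have "p \<in> P" "dist_from t (val p) \<le> of_int (J (Suc t) - J t)"
    using assms(3)[of t] blocks[of t] by (auto simp: block_counts_def)
  moreover have "J (Suc t) \<le> J w" using J_mono t(1) by simp
  ultimately show "p \<in> {p\<in>P. dist_from 0 (val p) \<le> of_int (J w - J 0)}"
    using dist_from_le[of 0 t "val p"] by auto
next
  show "int (card (\<Union>t<w. Pf t)) = 2 * (J w - J 0) - int (card {t. t < w \<and> \<not> fl t})"
  proof (rule sum_card_blocks)
    show "disjoint_family_on Pf {..<w}" using assms(1) by (intro disjoint_family_on_mono[OF _ assms(2)]) auto
    show "finite (Pf t)" "int (card (Pf t)) = 2 * (J (Suc t) - J t) - (if fl t then 0 else 1)"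
      if "t < w" for t
    proof -
      have "t < l" using that assms(1) by simp
      then show "finite (Pf t)" using assms(3)[of t] assms(4) by (blast intro: finite_subset)
      show "int (card (Pf t)) = 2 * (J (Suc t) - J t) - (if fl t then 0 else 1)"
        using blocks[OF \<open>t < l\<close>] by (simp add: block_counts_def)
    qed
  qed
qed

lemma nested_hall_if_blocks:
  assumes flags: "\<And>t r. t < l \<Longrightarrow> r < l \<Longrightarrow> \<not> fl t \<Longrightarrow> \<not> fl r \<Longrightarrow> t = r"
    and disj: "disjoint_family_on Pf {..<l}" and sub: "\<And>t. t < l \<Longrightarrow> Pf t \<subseteq> P" and "finite P"
    and blocks: "\<And>t. t < l \<Longrightarrow> block_counts (real k) val (J t) (J (Suc t)) (fl t) (Pf t)"
  shows "nested_hall k val P (of_int (J 0))"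
  unfolding nested_hall_def
proof (intro allI impI)
  fix m assume "m < k"
  then obtain w where w: "w < l" "of_int (J w - J 0) \<le> real m" "real m < of_int (J (Suc w) - J 0)"
    using obtain_cut[of "real m"] by auto
  define m' where "m' = nat (int m - (J w - J 0))"
  have m': "int m' = int m - (J w - J 0)" "int m' < J (Suc w) - J w" using w by (simp_all add: m'_def)
  define C where "C = card {p\<in>P. dist_from 0 (val p) \<le> real m}"
  define c where "c = card {t. t < w \<and> \<not> fl t}"
  define S1 where "S1 = (\<Union>t<w. Pf t)"
  define S2 where "S2 = {p\<in>Pf w. dist_from w (val p) \<le> real m'}"
  note before = UN_blocks_before[OF less_imp_le[OF w(1)] disj sub \<open>finite P\<close> blocks]
  have sub1: "S1 \<subseteq> {p\<in>P. dist_from 0 (val p) \<le> real m}"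
    using before(1) w(2) unfolding S1_def by fastforce
  have sub2: "S2 \<subseteq> {p\<in>P. dist_from 0 (val p) \<le> real m}"
  proof
    fix p assume "p \<in> S2"
    then have "p \<in> P" "dist_from w (val p) \<le> real m'" using sub[OF w(1)] by (auto simp: S2_def)
    moreover have "real m' = real m - of_int (J w - J 0)" using m'(1) by (metis of_int_diff of_int_of_nat_eq)
    ultimately show "p \<in> {p\<in>P. dist_from 0 (val p) \<le> real m}" using dist_from_le[of 0 w "val p"] by auto
  qed
  have "S1 \<inter> S2 = {}"
  proof -
    have "Pf t \<inter> Pf w = {}" if "t < w" for t
      using disjoint_family_onD[OF disj] that w(1) by simp
    then show ?thesis by (auto simp: S1_def S2_def)
  qed
  moreover have "finite S1" "finite S2"
    using sub1 sub[OF w(1)] \<open>finite P\<close> by (auto simp: S2_def intro: finite_subset)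
  ultimately have "card S1 + card S2 = card (S1 \<union> S2)" by (simp add: card_Un_disjoint)
  also have "\<dots> \<le> card {p\<in>P. dist_from 0 (val p) \<le> real m}"
    using sub1 sub2 \<open>finite P\<close> by (intro card_mono) auto
  finally have "card S1 + card S2 \<le> C" unfolding C_def .
  moreover have "int (card S1) = 2 * (J w - J 0) - int c"
    using before(2) unfolding S1_def c_def .
  moreover have "2 * m' + (if fl w then 1 else 0) \<le> card S2"
    using blocks[OF w(1)] m'(2) by (simp add: block_counts_def S2_def)
  moreover have "c \<le> (if fl w then 1 else 0)"
    unfolding c_def using flags w(1) by (intro card_false_flags_le) auto
  ultimately have "2 * m \<le> C" using m'(1) by (cases "fl w") simp_all
  then show "2 * m \<le> card {p\<in>P. dist_from 0 (val p) \<le> real m}" unfolding C_def .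
qed

lemma card_if_blocks:
  assumes "s < l" "disjoint_family_on Pf {..<l}" "\<And>t. t < l \<Longrightarrow> finite (Pf t)"
    and "\<And>t. t < l \<Longrightarrow> int (card (Pf t)) = 2 * (J (Suc t) - J t) - (if t \<noteq> s then 0 else 1)"
  shows "card (\<Union>t<l. Pf t) = 2 * k - 1"
proof -
  have "{t. t < l \<and> \<not> t \<noteq> s} = {s}" using assms(1) by auto
  then show ?thesis using sum_card_blocks[OF assms(2,3,4)] J_period k_pos by simp
qed

lemma card_dist_from_less_add:
  assumes "finite P" "t \<le> r" "r \<le> u" "u \<le> t + l"
  shows "card {p\<in>P. dist_from t (val p) < of_int (J u - J t)} =
    card {p\<in>P. dist_from t (val p) < of_int (J r - J t)} + card {p\<in>P. dist_from r (val p) < of_int (J u - J r)}"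
proof -
  have "J t \<le> J r" "J r \<le> J u" using J_mono assms by auto
  moreover have "J u \<le> J t + int k" using J_mono[OF assms(4)] J_add_period[of t] by simp
  ultimately have "0 \<le> real_of_int (J r - J t)" "0 \<le> real_of_int (J u - J r)"
      "real_of_int (J r - J t) + of_int (J u - J r) \<le> real k" by simp_all
  from card_cdist_less_add[OF _ this assms(1)] k_pos
  have "card {p\<in>P. dist_from t (val p) < of_int (J r - J t) + of_int (J u - J r)} =
      card {p\<in>P. dist_from t (val p) < of_int (J r - J t)} +
      card {p\<in>P. cdist (real k) (of_int (J t) + of_int (J r - J t)) (val p) < of_int (J u - J r)}"
    by simp
  then show ?thesis by simp
qed


lemma block_counts_add_period:
  "block_counts (real k) val (a + int q * int k) (b + int q * int k) f Q = block_counts (real k) val a b f Q"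
proof -
  have "cdist (real k) (of_int (a + int q * int k)) v = cdist (real k) (of_int a) v" for v
    using cdist_add_multiple[of "real k" "of_int a" "int q" v] k_pos by (simp add: mult.commute)
  then show ?thesis by (simp add: block_counts_def)
qed

lemma nested_hall_if_blocks_at:
  assumes "s < l" "u < l" "disjoint_family_on Pf {..<l}" "\<And>t. t < l \<Longrightarrow> Pf t \<subseteq> P" "finite P"
    and blocks: "\<And>t. t < l \<Longrightarrow> block_counts (real k) val (J t) (J (Suc t)) (t \<noteq> s) (Pf t)"
  shows "nested_hall k val P (of_int (J u))"
proof -
  interpret rotated: periodic_cuts k l "\<lambda>t. J (t + u)" by (rule rotate)
  let ?r = "\<lambda>t. (t + u) mod l"
  have r_less: "?r t < l" for t using l_pos by simp
  have r_inj: "t = t'" if "t < l" "t' < l" "?r t = ?r t'" for t t'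
    using add_mod_eq_imp_eq[OF that] .
  have J_r: "J (t + u) = J (?r t) + int ((t + u) div l) * int k"
      "J (Suc t + u) = J (Suc (?r t)) + int ((t + u) div l) * int k" for t
    using J_add_mult_period[of "?r t" "(t + u) div l"] J_add_mult_period[of "Suc (?r t)" "(t + u) div l"]
    by simp_all
  have "nested_hall k val P (of_int (J (0 + u)))"
  proof (rule rotated.nested_hall_if_blocks[where fl = "\<lambda>t. ?r t \<noteq> s" and Pf = "\<lambda>t. Pf (?r t)"])
    show "t = t'" if "t < l" "t' < l" "\<not> ?r t \<noteq> s" "\<not> ?r t' \<noteq> s" for t t'
      using that by (rule_tac r_inj) simp_all
    show "disjoint_family_on (\<lambda>t. Pf (?r t)) {..<l}"
      unfolding disjoint_family_on_def
    proof (intro ballI impI)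
      fix t t' assume "t \<in> {..<l}" "t' \<in> {..<l}" "t \<noteq> t'"
      then have "?r t \<noteq> ?r t'" using r_inj[of t t'] by auto
      then show "Pf (?r t) \<inter> Pf (?r t') = {}"
        using disjoint_family_onD[OF assms(3), of "?r t" "?r t'"] r_less by simp
    qed
    show "Pf (?r t) \<subseteq> P" if "t < l" for t using assms(4) r_less by blast
    show "block_counts (real k) val (J (t + u)) (J (Suc t + u)) (?r t \<noteq> s) (Pf (?r t))" for t
      using blocks[OF r_less] by (simp only: J_r(1)[of t] J_r(2)[of t] block_counts_add_period)
  qed (use assms(5) in simp)
  then show ?thesis by simp
qed


end

section \<open>Constructing the blocks\<close>

locale hall_on_cuts = periodic_cuts +
  fixes val :: "nat \<Rightarrow> real" and P :: "nat set"
  assumes finite_P: "finite P" and card_P: "card P = 2 * k - 1"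
    and hall: "\<And>s. s < l \<Longrightarrow> nested_hall k val P (of_int (J s))"
begin

definition below :: "nat \<Rightarrow> nat" where
  "below t = card {p\<in>P. dist_from 0 (val p) < of_int (J t - J 0)}"

definition excess :: "nat \<Rightarrow> int" where
  "excess t = int (below t) - 2 * (J t - J 0)"

definition peak :: nat where
  "peak = (GREATEST t. t < l \<and> (\<forall>r<l. excess r \<le> excess t))"

definition slack :: "nat \<Rightarrow> int" where
  "slack t = excess peak - excess t - (if peak < t then 1 else 0)"

definition arc :: "nat \<Rightarrow> nat set" where
  "arc t = {p\<in>P. dist_from t (val p) < of_int (J (Suc t) - J t)}"

definition at_cut :: "nat \<Rightarrow> nat set" where
  "at_cut t = {p\<in>P. dist_from t (val p) = 0}"

definition inside :: "nat \<Rightarrow> nat set" where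
  "inside t = {p\<in>P. 0 < dist_from t (val p) \<and> dist_from t (val p) < of_int (J (Suc t) - J t)}"

lemma below_add: "t \<le> l \<Longrightarrow> int (below t) + int (card {p\<in>P. dist_from t (val p) < of_int (J r - J t)}) = int (below r)"
  if "t \<le> r" "r \<le> l"
  using card_dist_from_less_add[OF finite_P, of 0 t r val] that by (simp add: below_def)

lemma below_0: "below 0 = 0"
proof -
  have "\<not> dist_from 0 v < 0" for v using cdist_bounds(1)[of "real k"] k_pos by (simp add: not_less)
  then show ?thesis by (simp add: below_def)
qed

lemma below_period: "below l = card P"
  using cdist_bounds(2)[of "real k"] k_pos J_period by (simp add: below_def)

lemma excess_0: "excess 0 = 0"
  by (simp add: excess_def below_0)

lemma excess_period: "excess l = -1"
  using card_P k_pos J_period by (simp add: excess_def below_period)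

lemma peak: "peak < l" "r < l \<Longrightarrow> excess r \<le> excess peak"
proof -
  define Q where "Q t \<longleftrightarrow> t < l \<and> (\<forall>r<l. excess r \<le> excess t)" for t
  have "Max (excess ` {..<l}) \<in> excess ` {..<l}" using l_pos by (intro Max_in) auto
  then obtain t0 where "t0 < l" "excess t0 = Max (excess ` {..<l})" by auto
  then have "Q t0" by (simp add: Q_def)
  then have "Q peak" unfolding peak_def Q_def[symmetric] by (rule GreatestI_nat[where b = l]) (simp add: Q_def)
  then show "peak < l" "r < l \<Longrightarrow> excess r \<le> excess peak" by (simp_all add: Q_def)
qed

lemma excess_less_peak:
  assumes "peak < r" "r < l" shows "excess r < excess peak"
proof (rule ccontr)
  assume "\<not> excess r < excess peak"
  then have "\<forall>r'<l. excess r' \<le> excess r" using peak(2) by (auto intro: order_trans simp: not_less)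
  then have "r \<le> peak" unfolding peak_def using assms(2) by (intro Greatest_le_nat[where b = l]) auto
  then show False using assms(1) by simp
qed

lemma slack_nonneg: "t < l \<Longrightarrow> 0 \<le> slack t"
  using peak(2)[of t] excess_less_peak[of t] by (auto simp: slack_def)

lemma slack_Suc_mod: "t < l \<Longrightarrow> slack (Suc t mod l) = slack (Suc t)"
  using excess_0 excess_period peak(1) by (cases "Suc t = l") (auto simp: slack_def)

lemma card_from_peak_less:
  assumes "t < l"
  shows "int (card {p\<in>P. dist_from peak (val p) < of_int (J (if peak \<le> t then t else t + l) - J peak)}) =
    int (below t) - int (below peak) + (if peak \<le> t then 0 else int (card P))"
proof (cases "peak \<le> t")
  case True
  then show ?thesis using below_add[of peak t] assms peak(1) by simp
next
  case False
  have "card {p\<in>P. dist_from peak (val p) < of_int (J (t + l) - J peak)} =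
      card {p\<in>P. dist_from peak (val p) < of_int (J l - J peak)} +
      card {p\<in>P. dist_from l (val p) < of_int (J (t + l) - J l)}"
    using card_dist_from_less_add[OF finite_P, of peak l "t + l" val] peak(1) False by simp
  moreover have "card {p\<in>P. dist_from l (val p) < of_int (J (t + l) - J l)} = below t"
    using dist_from_add_mult_period[of 0 1] J_add_period[of t] J_period by (simp add: below_def)
  ultimately show ?thesis using below_add[of peak l] peak(1) below_period False by simp
qed

lemma card_dist_from_le_lower_bound:
  assumes "t < l" "int m < J (Suc t) - J t"
  shows "2 * int m + (if t \<noteq> peak then 1 else 0) + slack t \<le> int (card {p\<in>P. dist_from t (val p) \<le> real m})"
proof -
  define t' where "t' = (if peak \<le> t then t else t + l)"
  define \<delta> where "\<delta> = J t' - J peak"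
  have J_t': "J t' = J t + (if peak \<le> t then 0 else int k)" using J_add_period by (simp add: t'_def)
  have "peak \<le> t'" "J (Suc t) \<le> J l" "J 0 \<le> J peak" using assms(1) peak(1) J_mono by (auto simp: t'_def)
  then have \<delta>: "0 \<le> \<delta>" "\<delta> + int m < int k"
    using J_mono[of peak t'] assms(2) J_period J_t' J_mono[of "Suc t" peak] by (auto simp: \<delta>_def split: if_splits)
  define m2 where "m2 = nat (\<delta> + int m)"
  have "m2 < k" using \<delta> by (simp add: m2_def)
  then have "2 * m2 \<le> card {p\<in>P. dist_from peak (val p) \<le> real m2}"
    using hall[OF peak(1)] unfolding nested_hall_def by blast
  also have "real m2 = of_int \<delta> + real m" using \<delta> by (simp add: m2_def)
  also have "card {p\<in>P. dist_from peak (val p) \<le> of_int \<delta> + real m} =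
      card {p\<in>P. dist_from peak (val p) < of_int \<delta>} + card {p\<in>P. dist_from t' (val p) \<le> real m}"
    using card_cdist_le_add[of "real k" "of_int \<delta>" "real m" P "of_int (J peak)" val] \<delta> k_pos finite_P
    by (simp add: \<delta>_def)
  finally have "2 * int m2 \<le> int (card {p\<in>P. dist_from peak (val p) < of_int \<delta>}) +
      int (card {p\<in>P. dist_from t' (val p) \<le> real m})" by linarith
  moreover have "dist_from t' v = dist_from t v" for v
    using dist_from_add_mult_period[of t 1 v] by (simp add: t'_def)
  ultimately show ?thesis
    using card_from_peak_less[OF assms(1)] card_P k_pos J_t' \<delta> peak(1) assms(1)
    by (auto simp: m2_def slack_def excess_def \<delta>_def t'_def split: if_splits)
qed

lemma arc_eq: "arc t = at_cut t \<union> inside t" "at_cut t \<inter> inside t = {}"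
  using J_less_Suc[of t] cdist_bounds(1)[of "real k"] k_pos
  by (auto simp: arc_def at_cut_def inside_def order_le_less)

lemma card_arc: "t < l \<Longrightarrow> int (card (arc t)) = int (below (Suc t)) - int (below t)"
  using below_add[of t "Suc t"] by (simp add: arc_def)

lemma mem_arc_iff:
  "t < l \<Longrightarrow> p \<in> arc t \<longleftrightarrow>
    p \<in> P \<and> of_int (J t - J 0) \<le> dist_from 0 (val p) \<and> dist_from 0 (val p) < of_int (J (Suc t) - J 0)"
  using dist_from_less_iff by (auto simp: arc_def)

lemma arc_disjoint:
  assumes "t < l" "r < l" "t \<noteq> r" shows "arc t \<inter> arc r = {}"
proof -
  have "arc t \<inter> arc r = {}" if "t < r" "r < l" for t r
  proof (rule equals0I)
    fix p assume "p \<in> arc t \<inter> arc r"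
    moreover have "real_of_int (J (Suc t) - J 0) \<le> of_int (J r - J 0)" using J_mono[of "Suc t" r] that by simp
    ultimately show False using that mem_arc_iff[of t p] mem_arc_iff[of r p] by auto
  qed
  then show ?thesis using assms by (metis inf_commute linorder_neq_iff)
qed

lemma arc_cover:
  assumes "p \<in> P" obtains t where "t < l" "p \<in> arc t"
proof -
  have "0 \<le> dist_from 0 (val p)" "dist_from 0 (val p) < real k" using cdist_bounds[of "real k"] k_pos by auto
  then obtain t where "t < l" "of_int (J t - J 0) \<le> dist_from 0 (val p)" "dist_from 0 (val p) < of_int (J (Suc t) - J 0)"
    by (rule obtain_cut)
  then show ?thesis using that mem_arc_iff assms by blast
qed

lemma at_cut_mod: "at_cut (t mod l) = at_cut t"
  by (simp add: at_cut_def dist_from_mod)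

lemma slack_le_card_at_cut:
  assumes "t < l" shows "slack t \<le> int (card (at_cut t))"
proof -
  have "0 \<le> dist_from t v" for v using cdist_bounds(1)[of "real k"] k_pos by simp
  then have "{p\<in>P. dist_from t (val p) \<le> real 0} = at_cut t" by (auto simp: at_cut_def intro: order_antisym)
  moreover have "2 * int 0 + (if t \<noteq> peak then 1 else 0) + slack t \<le> int (card {p\<in>P. dist_from t (val p) \<le> real 0})"
    by (rule card_dist_from_le_lower_bound[OF assms]) (use J_less_Suc[of t] in simp)
  ultimately show ?thesis by (simp split: if_splits)
qed

definition keep :: "nat \<Rightarrow> nat set" where
  "keep t = (SOME X. X \<subseteq> at_cut t \<and> card X = card (at_cut t) - nat (slack t))"

lemma keep: "keep t \<subseteq> at_cut t" "card (keep t) = card (at_cut t) - nat (slack t)"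
proof -
  have "\<exists>X. X \<subseteq> at_cut t \<and> card X = card (at_cut t) - nat (slack t)"
    using obtain_subset_with_card_n[of "card (at_cut t) - nat (slack t)" "at_cut t"] by auto
  from someI_ex[OF this] show "keep t \<subseteq> at_cut t" "card (keep t) = card (at_cut t) - nat (slack t)"
    unfolding keep_def by blast+
qed

lemma finite_at_cut: "finite (at_cut t)"
  using finite_P by (simp add: at_cut_def)

definition handed :: "nat \<Rightarrow> nat set" where
  "handed t = at_cut t - keep t"

lemma card_handed:
  assumes "t < l" shows "int (card (handed t)) = slack t"
proof -
  have "card (handed t) = card (at_cut t) - card (keep t)"
    unfolding handed_def using keep(1) finite_at_cut by (intro card_Diff_subset) (auto intro: finite_subset)
  also have "\<dots> = nat (slack t)" using keep(2) slack_le_card_at_cut[OF assms] by simp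
  finally show ?thesis using slack_nonneg[OF assms] by simp
qed

definition part :: "nat \<Rightarrow> nat set" where
  "part t = keep t \<union> inside t \<union> handed (Suc t mod l)"

lemma part_subset: "part t \<subseteq> P"
  using keep(1) by (auto simp: part_def handed_def at_cut_def inside_def)

lemma finite_keep: "finite (keep t)"
  using keep(1) finite_at_cut by (rule finite_subset)

lemma Suc_mod_less: "t < l \<Longrightarrow> Suc t mod l < l"
  using l_pos by simp

lemma keep_Un_inside_subset_arc: "keep t \<union> inside t \<subseteq> arc t"
  using keep(1) arc_eq(1) by blast

lemma keep_Un_inside_Int_handed:
  assumes "t < l" "r < l" shows "(keep t \<union> inside t) \<inter> handed r = {}"
proof (cases "r = t")
  case True
  then show ?thesis using arc_eq(2) by (auto simp: handed_def)
next
  case False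
  then show ?thesis using arc_disjoint[OF assms] keep_Un_inside_subset_arc arc_eq(1) by (auto simp: handed_def)
qed

lemma disjoint_family_part: "disjoint_family_on part {..<l}"
  unfolding disjoint_family_on_def
proof (intro ballI impI)
  fix t r assume "t \<in> {..<l}" "r \<in> {..<l}" "t \<noteq> r"
  then have tr: "t < l" "r < l" "t \<noteq> r" by auto
  have "Suc t mod l \<noteq> Suc r mod l" using tr by (auto simp: mod_if split: if_splits)
  then have "handed (Suc t mod l) \<inter> handed (Suc r mod l) = {}"
    using arc_disjoint[OF Suc_mod_less[OF tr(1)] Suc_mod_less[OF tr(2)]] arc_eq(1) by (auto simp: handed_def)
  moreover have "(keep t \<union> inside t) \<inter> (keep r \<union> inside r) = {}"
    using arc_disjoint[OF tr] keep_Un_inside_subset_arc by blast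
  ultimately show "part t \<inter> part r = {}"
    using keep_Un_inside_Int_handed[OF tr(1) Suc_mod_less[OF tr(2)]] keep_Un_inside_Int_handed[OF tr(2) Suc_mod_less[OF tr(1)]]
    unfolding part_def by blast
qed

lemma UN_part: "(\<Union>t<l. part t) = P"
proof
  show "(\<Union>t<l. part t) \<subseteq> P" using part_subset by blast
next
  show "P \<subseteq> (\<Union>t<l. part t)"
  proof
    fix p assume "p \<in> P"
    then obtain t where t: "t < l" "p \<in> arc t" by (rule arc_cover)
    show "p \<in> (\<Union>t<l. part t)"
    proof (cases "p \<in> keep t \<union> inside t")
      case True
      then show ?thesis using t(1) by (auto simp: part_def)
    next
      case False
      define r where "r = (if t = 0 then l - 1 else t - 1)"
      have "r < l" "Suc r mod l = t" using t(1) l_pos by (auto simp: r_def)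
      moreover have "p \<in> handed t" using False t(2) arc_eq(1) by (auto simp: handed_def)
      ultimately show ?thesis by (auto simp: part_def)
    qed
  qed
qed

lemma card_part:
  assumes "t < l" shows "int (card (part t)) = 2 * (J (Suc t) - J t) - (if t \<noteq> peak then 0 else 1)"
proof -
  let ?n = "Suc t mod l"
  have fin: "finite (keep t)" "finite (inside t)" "finite (handed ?n)"
    using finite_keep finite_at_cut finite_P by (simp_all add: inside_def handed_def)
  have "keep t \<inter> inside t = {}" using keep(1) arc_eq(2) by blast
  then have "card (part t) = card (keep t) + card (inside t) + card (handed ?n)"
    using keep_Un_inside_Int_handed[OF assms Suc_mod_less[OF assms]] fin by (simp add: part_def card_Un_disjoint)
  moreover have "int (card (keep t)) = int (card (at_cut t)) - slack t"
    using keep(2) slack_le_card_at_cut[OF assms] slack_nonneg[OF assms] by simp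
  moreover have "int (card (at_cut t)) + int (card (inside t)) = int (below (Suc t)) - int (below t)"
    using card_arc[OF assms] arc_eq finite_at_cut fin(2) by (simp add: card_Un_disjoint)
  moreover have "int (card (handed ?n)) = slack (Suc t)"
    using card_handed[OF Suc_mod_less[OF assms]] slack_Suc_mod[OF assms] by simp
  ultimately show ?thesis by (auto simp: slack_def excess_def less_Suc_eq)
qed

lemma dist_from_part_le:
  assumes "p \<in> part t" shows "dist_from t (val p) \<le> of_int (J (Suc t) - J t)"
proof -
  from assms consider "p \<in> keep t" | "p \<in> inside t" | "p \<in> at_cut (Suc t mod l)"
    by (auto simp: part_def handed_def)
  then show ?thesis
  proof cases
    case 1
    then have "dist_from t (val p) = 0" using keep(1) by (auto simp: at_cut_def)
    then show ?thesis using J_less_Suc[of t] by simp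
  next
    case 2
    then show ?thesis by (simp add: inside_def)
  next
    case 3
    then have "p \<in> at_cut (Suc t)" using at_cut_mod[of "Suc t"] by simp
    then show ?thesis using dist_from_le[of t "Suc t" "val p"] by (simp add: at_cut_def)
  qed
qed

lemma card_part_le:
  assumes "t < l" "int m < J (Suc t) - J t"
  shows "2 * m + (if t \<noteq> peak then 1 else 0) \<le> card {p\<in>part t. dist_from t (val p) \<le> real m}"
proof -
  let ?I = "{p\<in>inside t. dist_from t (val p) \<le> real m}"
  let ?N = "{p\<in>part t. dist_from t (val p) \<le> real m}"
  have "?I \<subseteq> P" "?N \<subseteq> P" using part_subset[of t] by (auto simp: inside_def)
  then have fin: "finite (keep t)" "finite ?I" "finite ?N"
    using finite_keep finite_subset[OF _ finite_P] by blast+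
  have "real m < of_int (J (Suc t) - J t)" using assms(2) by linarith
  moreover have "0 \<le> dist_from t v" for v using cdist_bounds(1)[of "real k"] k_pos by simp
  ultimately have "p \<in> P \<and> dist_from t (val p) \<le> real m \<longleftrightarrow> p \<in> at_cut t \<union> ?I" for p
    by (cases "dist_from t (val p) = 0") (auto simp: at_cut_def inside_def less_le)
  then have "{p\<in>P. dist_from t (val p) \<le> real m} = at_cut t \<union> ?I" by blast
  moreover have "at_cut t \<inter> ?I = {}" using arc_eq(2) by blast
  ultimately have "card {p\<in>P. dist_from t (val p) \<le> real m} = card (at_cut t) + card ?I"
    using finite_at_cut fin(2) by (simp add: card_Un_disjoint)
  moreover have "int (card (keep t)) = int (card (at_cut t)) - slack t"
    using keep(2) slack_le_card_at_cut[OF assms(1)] slack_nonneg[OF assms(1)] by simp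
  moreover have "card (keep t) + card ?I \<le> card ?N"
  proof -
    have "keep t \<inter> ?I = {}" using keep(1) arc_eq(2) by blast
    then have "card (keep t) + card ?I = card (keep t \<union> ?I)" using fin by (simp add: card_Un_disjoint)
    also have "\<dots> \<le> card ?N"
      using keep(1)[of t] by (intro card_mono[OF fin(3)]) (auto simp: part_def at_cut_def)
    finally show ?thesis .
  qed
  ultimately show ?thesis using card_dist_from_le_lower_bound[OF assms] by (cases "t = peak") simp_all
qed

lemma blocks_exist:
  "\<exists>s<l. \<exists>Pf. disjoint_family_on Pf {..<l} \<and> (\<Union>t<l. Pf t) = P \<and>
     (\<forall>t<l. block_counts (real k) val (J t) (J (Suc t)) (t \<noteq> s) (Pf t))"
proof (intro exI[of _ peak] conjI exI[of _ part] allI impI)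
  fix t assume "t < l"
  then show "block_counts (real k) val (J t) (J (Suc t)) (t \<noteq> peak) (part t)"
    using card_part dist_from_part_le card_part_le by (simp add: block_counts_def)
qed (use peak(1) disjoint_family_part UN_part in auto)

end

section \<open>The sets \<open>X\<^sub>I\<close>\<close>

lemma
  assumes "I \<subseteq> {..<k}" "I \<noteq> {}"
  shows idx_less_Suc: "t < card I \<Longrightarrow> idx k I t < idx k I (Suc t)"
    and idx_card: "idx k I (card I) = idx k I 0 + k"
    and image_idx: "idx k I ` {..<card I} = I"
proof -
  have "finite I" using assms(1) finite_subset by blast
  define xs where "xs = sorted_list_of_set I"
  have xs: "length xs = card I" "sorted_wrt (<) xs" "set xs = I" "card I > 0"
    using \<open>finite I\<close> assms(2) by (simp_all add: xs_def card_gt_0_iff)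
  have idx_nth: "idx k I t = xs ! t" if "t < card I" for t using that xs(1) by (simp add: idx_def xs_def)
  show card: "idx k I (card I) = idx k I 0 + k" using xs(1,4) idx_nth[of 0] by (simp add: idx_def xs_def)
  show "idx k I t < idx k I (Suc t)" if "t < card I"
  proof (cases "Suc t < card I")
    case True
    then show ?thesis using idx_nth that sorted_wrt_nth_less[OF xs(2), of t "Suc t"] xs(1) by simp
  next
    case False
    then have "Suc t = card I" using that by simp
    moreover have "xs ! t < k" using nth_mem[of t xs] that xs(1,3) assms(1) by auto
    ultimately show ?thesis using idx_nth[OF that] idx_nth[of 0] card xs(4) by simp
  qed
  have "idx k I ` {..<card I} = (!) xs ` {..<length xs}" using idx_nth xs(1) by simp
  also have "\<dots> = I" using xs(3) by (auto simp: in_set_conv_nth)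
  finally show "idx k I ` {..<card I} = I" .
qed

definition cut :: "nat \<Rightarrow> nat set \<Rightarrow> nat \<Rightarrow> int" where
  "cut k I t = int (idx k I (t mod card I)) + int (t div card I) * int k"

lemma cut_eq_idx:
  assumes "I \<subseteq> {..<k}" "I \<noteq> {}" "t \<le> card I"
  shows "cut k I t = int (idx k I t)"
proof -
  have "card I > 0" using assms(1,2) finite_subset by (auto simp: card_gt_0_iff)
  then show ?thesis using assms(3) idx_card[OF assms(1,2)] by (cases "t = card I") (auto simp: cut_def)
qed

lemma periodic_cuts_cut:
  assumes "k \<ge> 1" "I \<subseteq> {..<k}" "I \<noteq> {}"
  shows "periodic_cuts k (card I) (cut k I)"
proof
  have "card I > 0" using assms(2,3) finite_subset by (auto simp: card_gt_0_iff)
  fix t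
  show "0 < k" using assms(1) by simp
  show "cut k I (t + card I) = cut k I t + int k"
    using \<open>card I > 0\<close> by (simp add: cut_def algebra_simps)
  have "cut k I (Suc t) = int (idx k I (Suc (t mod card I))) + int (t div card I) * int k"
    using \<open>card I > 0\<close> idx_card[OF assms(2,3)] by (auto simp: cut_def mod_Suc div_Suc algebra_simps)
  then show "cut k I t < cut k I (Suc t)"
    using idx_less_Suc[OF assms(2,3), of "t mod card I"] \<open>card I > 0\<close> by (simp add: cut_def)
qed

lemma Cblock_eq_block: "Cblock k I s = (\<lambda>t. block (idx k I t) (idx k I (Suc t)) (t \<noteq> s))"
  by (simp add: fun_eq_iff Cblock_def block_def Let_def)

lemma mem_symclos_CIs_iff:
  assumes "k \<ge> 1" "I \<subseteq> {..<k}" "I \<noteq> {}"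
  shows "x \<in> symclos (CIs k I s) \<longleftrightarrow> in_torus (real k) x \<and>
    (\<exists>Pf. disjoint_family_on Pf {..<card I} \<and> (\<Union>t<card I. Pf t) = {..<length x} \<and>
       (\<forall>t<card I. block_counts (real k) (nth x) (cut k I t) (cut k I (Suc t)) (t \<noteq> s) (Pf t)))"
proof -
  have "CIs k I s = tbox (real k) (concat (map (\<lambda>t. block (idx k I t) (idx k I (Suc t)) (t \<noteq> s)) [0..<card I]))"
    by (simp add: CIs_def Cblock_eq_block)
  moreover have "arc_matching (real k) (nth x) Q (block (idx k I t) (idx k I (Suc t)) (t \<noteq> s)) \<longleftrightarrow>
      block_counts (real k) (nth x) (cut k I t) (cut k I (Suc t)) (t \<noteq> s) Q" if "t < card I" "finite Q" for t Q
    using arc_matching_block_iff[OF idx_less_Suc[OF assms(2,3) that(1)] that(2)]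
      cut_eq_idx[OF assms(2,3), of t] cut_eq_idx[OF assms(2,3), of "Suc t"] that(1) by simp
  moreover have "finite (Pf t)" if "(\<Union>t<card I. Pf t) = {..<length x}" "t < card I" for Pf t
    using that by (metis UN_upper finite_lessThan finite_subset lessThan_iff)
  ultimately show ?thesis
    using assms(1) by (simp add: mem_symclos_tbox_iff arc_matching_concat) (metis (no_types, lifting))
qed

lemma Inter_Xi_subset:
  assumes "k \<ge> 1" "I \<subseteq> {..<k}" "I \<noteq> {}"
  shows "(\<Inter>i\<in>I. Xi k i) \<subseteq> (\<Union>s<card I. symclos (CIs k I s))"
proof
  fix x assume x: "x \<in> (\<Inter>i\<in>I. Xi k i)"
  obtain i where "i \<in> I" using assms(3) by blast
  then have len: "length x = 2 * k - 1" and torus: "in_torus (real k) x"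
    using x mem_Xi_iff[OF assms(1)] by blast+
  have "hall_on_cuts k (card I) (cut k I) (nth x) {..<length x}"
  proof (rule hall_on_cuts.intro[OF periodic_cuts_cut[OF assms] hall_on_cuts_axioms.intro])
    show "nested_hall k (nth x) {..<length x} (of_int (cut k I s))" if "s < card I" for s
    proof -
      have "idx k I s \<in> I" using image_idx[OF assms(2,3)] that by blast
      then have "x \<in> Xi k (idx k I s)" using x by blast
      then have "nested_hall k (nth x) {..<length x} (real (idx k I s))" using mem_Xi_iff[OF assms(1)] by blast
      then show ?thesis using cut_eq_idx[OF assms(2,3), of s] that by simp
    qed
  qed (use len in simp_all)
  then obtain s Pf where "s < card I" "disjoint_family_on Pf {..<card I}" "(\<Union>t<card I. Pf t) = {..<length x}"
      "\<forall>t<card I. block_counts (real k) (nth x) (cut k I t) (cut k I (Suc t)) (t \<noteq> s) (Pf t)"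
    using hall_on_cuts.blocks_exist by metis
  moreover from this have "x \<in> symclos (CIs k I s)"
    unfolding mem_symclos_CIs_iff[OF assms] using torus by blast
  ultimately show "x \<in> (\<Union>s<card I. symclos (CIs k I s))" by blast
qed

lemma symclos_CIs_subset:
  assumes "k \<ge> 1" "I \<subseteq> {..<k}" "I \<noteq> {}"
  shows "(\<Union>s<card I. symclos (CIs k I s)) \<subseteq> (\<Inter>i\<in>I. Xi k i)"
proof
  fix x assume "x \<in> (\<Union>s<card I. symclos (CIs k I s))"
  then obtain s where s: "s < card I" and "x \<in> symclos (CIs k I s)" by blast
  then obtain Pf where torus: "in_torus (real k) x"
    and disj: "disjoint_family_on Pf {..<card I}" and cover: "(\<Union>t<card I. Pf t) = {..<length x}"
    and blocks: "\<And>t. t < card I \<Longrightarrow> block_counts (real k) (nth x) (cut k I t) (cut k I (Suc t)) (t \<noteq> s) (Pf t)"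
    unfolding mem_symclos_CIs_iff[OF assms] by blast
  interpret periodic_cuts k "card I" "cut k I" by (rule periodic_cuts_cut[OF assms])
  have sub: "Pf t \<subseteq> {..<length x}" if "t < card I" for t using cover that by blast
  have "card (\<Union>t<card I. Pf t) = 2 * k - 1"
  proof (rule card_if_blocks[OF s disj])
    show "finite (Pf t)" if "t < card I" for t using sub[OF that] by (rule finite_subset) simp
    show "int (card (Pf t)) = 2 * (cut k I (Suc t) - cut k I t) - (if t \<noteq> s then 0 else 1)"
      if "t < card I" for t using blocks[OF that] by (simp add: block_counts_def)
  qed
  then have len: "length x = 2 * k - 1" using cover by simp
  show "x \<in> (\<Inter>i\<in>I. Xi k i)"
  proof
    fix i assume "i \<in> I"
    then have "i \<in> idx k I ` {..<card I}" using image_idx[OF assms(2,3)] by simp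
    then obtain u where u: "u < card I" "i = idx k I u" by blast
    have "nested_hall k (nth x) {..<length x} (of_int (cut k I u))"
      by (rule nested_hall_if_blocks_at[OF s u(1) disj sub finite_lessThan blocks])
    then show "x \<in> Xi k i" using mem_Xi_iff[OF assms(1)] len torus u cut_eq_idx[OF assms(2,3)] by simp
  qed
qed

lemma Inter_Xi_eq:
  assumes "k \<ge> 1" "I \<subseteq> {..<k}" "I \<noteq> {}"
  shows "(\<Inter>i\<in>I. Xi k i) = (\<Union>s<card I. symclos (CIs k I s))"
  using Inter_Xi_subset[OF assms] symclos_CIs_subset[OF assms] by (rule equalityI)

lemma mset_diagonal_blocks:
  "mset (concat (map (\<lambda>t. block t (Suc t) (t \<noteq> s)) [0..<n])) =
   mset (map (\<lambda>i. (real i, real i)) (filter (\<lambda>i. i \<noteq> s) [0..<n]) @ map (\<lambda>i. (real i, real i + 1)) [0..<n])"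
  by (induction n) (auto simp: block_def add_ac)

lemma symclos_CIs_lessThan:
  assumes "k \<ge> 1"
  shows "symclos (CIs k {..<k} s) = symclos (tbox (real k)
    (map (\<lambda>i. (real i, real i)) (filter (\<lambda>i. i \<noteq> s) [0..<k]) @ map (\<lambda>i. (real i, real i + 1)) [0..<k]))"
proof -
  have "sorted_list_of_set {..<k} = [0..<k]" by (simp add: lessThan_atLeast0)
  then have "idx k {..<k} t = t" if "t \<le> k" for t
    using that assms by (cases "t = k") (auto simp: idx_def)
  then have "map (Cblock k {..<k} s) [0..<k] = map (\<lambda>t. block t (Suc t) (t \<noteq> s)) [0..<k]"
    by (simp add: Cblock_eq_block)
  then have "CIs k {..<k} s = tbox (real k) (concat (map (\<lambda>t. block t (Suc t) (t \<noteq> s)) [0..<k]))"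
    by (simp only: CIs_def card_lessThan)
  then show ?thesis using symclos_tbox_mset_cong[OF _ mset_diagonal_blocks, of "real k" s k] assms by simp
qed

theorem lemmaL:
  fixes k :: nat and I :: "nat set"
  assumes "k \<ge> 1" and "I \<subseteq> {..<k}" and "I \<noteq> {}"
  shows "(\<Inter>i\<in>I. Xi k i) = (\<Union>s<card I. symclos (CIs k I s))
    \<and> (\<Inter>i<k. Xi k i) =
         (\<Union>istar<k. symclos (tbox (real k)
             (map (\<lambda>i. (real i, real i)) (filter (\<lambda>i. i \<noteq> istar) [0..<k])
              @ map (\<lambda>i. (real i, real i + 1)) [0..<k])))"
proof
  show "(\<Inter>i\<in>I. Xi k i) = (\<Union>s<card I. symclos (CIs k I s))" by (rule Inter_Xi_eq[OF assms])
  have "0 \<in> {..<k}" using assms(1) by simp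
  then have "{..<k} \<noteq> {}" by blast
  then show "(\<Inter>i<k. Xi k i) = (\<Union>istar<k. symclos (tbox (real k)
             (map (\<lambda>i. (real i, real i)) (filter (\<lambda>i. i \<noteq> istar) [0..<k])
              @ map (\<lambda>i. (real i, real i + 1)) [0..<k])))"
    using Inter_Xi_eq[OF assms(1) subset_refl] symclos_CIs_lessThan[OF assms(1)] by simp
qed

end
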